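(* Let $\mathcal{X}=(X,d_X,\mu)$, $\mathcal{Y}=(Y,d_Y,\nu)$ be mm-spaces, $\lambda:\mathbb{R}_+\to\mathbb{R}$, $\rho>0$, $\epsilon\geq0$, and $D_\phi=\rho\,\mathrm{KL}$. Fix $\gamma\in\mathcal{M}_+(X\times Y)$. Then any $\pi\in\arg\min_\pi\big[\mathcal{F}(\pi,\gamma)+\epsilon\,\mathrm{KL}(\pi\otimes\gamma|(\mu\otimes\nu)^{\otimes2})\big]$ is a solution of $$\min_\pi\int c^\epsilon_\gamma(x,y)\,d\pi(x,y)+\rho\,m(\gamma)\mathrm{KL}(\pi_1|\mu)+\rho\,m(\gamma)\mathrm{KL}(\pi_2|\nu)+\epsilon\,m(\gamma)\mathrm{KL}(\pi|\mu\otimes\nu),$$ where $c^\epsilon_\gamma(x,y)=\int\lambda(|d_X(x,x')-d_Y(y,y')|)\,d\gamma(x',y')+\rho\int\log(\frac{d\gamma_1}{d\mu})d\gamma_1+\rho\int\log(\frac{d\gamma_2}{d\nu})d\gamma_2+\epsilon\int\log(\frac{d\gamma}{d(\mu\otimes\nu)})d\gamma$.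
   Context: An mm-space is a complete separable metric space with a positive (finite) Borel measure. $m(\alpha)$ is the total mass of $\alpha$, and $\pi_1,\pi_2$ (resp. $\gamma_1,\gamma_2$) are the marginals of $\pi$ (resp. $\gamma$). $\mathrm{KL}(\alpha|\beta)=\int\log(\frac{d\alpha}{d\beta})d\alpha-m(\alpha)+m(\beta)$ if $\alpha\ll\beta$, $+\infty$ otherwise. $(\mu\otimes\nu)^{\otimes2}=(\mu\otimes\nu)\otimes(\mu\otimes\nu)$. $\mathcal{F}(\pi,\gamma)=\int\lambda(|d_X(x,x')-d_Y(y,y')|)\,d\pi(x,y)\,d\gamma(x',y')+D_\phi(\pi_1\otimes\gamma_1|\mu\otimes\mu)+D_\phi(\pi_2\otimes\gamma_2|\nu\otimes\nu)$. *)

theory Defs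
  imports "HOL-Analysis.Analysis"
begin

text \<open>Extended integral of an extended-real valued function: positive part minus
  negative part (value in ereal; the Isabelle ereal convention is used when both
  parts are infinite).\<close>
definition eint :: "'a measure \<Rightarrow> ('a \<Rightarrow> ereal) \<Rightarrow> ereal" where
  "eint M f = enn2ereal (\<integral>\<^sup>+ x. e2ennreal (f x) \<partial>M)
              - enn2ereal (\<integral>\<^sup>+ x. e2ennreal (- f x) \<partial>M)"

definition mass :: "'a measure \<Rightarrow> real" where
  "mass M = measure M (space M)"

definition logint :: "'a measure \<Rightarrow> 'a measure \<Rightarrow> ereal" where
  "logint \<alpha> \<beta> = (if sets \<alpha> = sets \<beta> \<and> absolutely_continuous \<beta> \<alpha>
     then eint \<alpha> (\<lambda>x. ereal (ln (enn2real (RN_deriv \<beta> \<alpha> x)))) else \<infinity>)"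

definition KL :: "'a measure \<Rightarrow> 'a measure \<Rightarrow> ereal" where
  "KL \<alpha> \<beta> = (if sets \<alpha> = sets \<beta> \<and> absolutely_continuous \<beta> \<alpha>
     then logint \<alpha> \<beta> - ereal (mass \<alpha>) + ereal (mass \<beta>) else \<infinity>)"

definition marg1 :: "('a \<times> 'b) measure \<Rightarrow> 'a::topological_space measure" where
  "marg1 \<pi> = distr \<pi> borel fst"
definition marg2 :: "('a \<times> 'b) measure \<Rightarrow> 'b::topological_space measure" where
  "marg2 \<pi> = distr \<pi> borel snd"

definition Mplus :: "'a::topological_space measure set" where
  "Mplus = {M. sets M = sets borel \<and> finite_measure M}"

definition GWF :: "('a::metric_space \<Rightarrow> 'a \<Rightarrow> real) \<Rightarrow> ('b::metric_space \<Rightarrow> 'b \<Rightarrow> real)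
   \<Rightarrow> 'a measure \<Rightarrow> 'b measure \<Rightarrow> (real \<Rightarrow> real) \<Rightarrow> real
   \<Rightarrow> ('a \<times> 'b) measure \<Rightarrow> ('a \<times> 'b) measure \<Rightarrow> ereal" where
  "GWF dX dY \<mu> \<nu> lam \<rho> \<pi> \<gamma> =
     eint (\<pi> \<Otimes>\<^sub>M \<gamma>) (\<lambda>((x,y),(x',y')). ereal (lam \<bar>dX x x' - dY y y'\<bar>))
     + ereal \<rho> * KL (marg1 \<pi> \<Otimes>\<^sub>M marg1 \<gamma>) (\<mu> \<Otimes>\<^sub>M \<mu>)
     + ereal \<rho> * KL (marg2 \<pi> \<Otimes>\<^sub>M marg2 \<gamma>) (\<nu> \<Otimes>\<^sub>M \<nu>)"

definition cost :: "('a::metric_space \<Rightarrow> 'a \<Rightarrow> real) \<Rightarrow> ('b::metric_space \<Rightarrow> 'b \<Rightarrow> real)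
   \<Rightarrow> 'a measure \<Rightarrow> 'b measure \<Rightarrow> (real \<Rightarrow> real) \<Rightarrow> real \<Rightarrow> real
   \<Rightarrow> ('a \<times> 'b) measure \<Rightarrow> 'a \<times> 'b \<Rightarrow> ereal" where
  "cost dX dY \<mu> \<nu> lam \<rho> \<epsilon> \<gamma> = (\<lambda>(x,y).
     eint \<gamma> (\<lambda>(x',y'). ereal (lam \<bar>dX x x' - dY y y'\<bar>))
     + ereal \<rho> * logint (marg1 \<gamma>) \<mu>
     + ereal \<rho> * logint (marg2 \<gamma>) \<nu>
     + ereal \<epsilon> * logint \<gamma> (\<mu> \<Otimes>\<^sub>M \<nu>))"

end

theory Submission
  imports Defs
begin

text \<open>
  For finite measures the entropy integral of a product splits as
  \<open>\<integral>log(d(\<alpha>\<otimes>\<beta>)/d(\<mu>\<otimes>\<nu>)) d(\<alpha>\<otimes>\<beta>) = m(\<beta>) \<integral>log(d\<alpha>/d\<mu>) d\<alpha> + m(\<alpha>) \<integral>log(d\<beta>/d\<nu>) d\<beta>\<close>.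
  Together with Tonelli for the \<open>\<lambda>\<close>-term this shows that, when the three entropies of \<open>\<gamma>\<close>
  are finite, the objective \<open>\<F>(\<pi>,\<gamma>) + \<epsilon> KL(\<pi>\<otimes>\<gamma>|(\<mu>\<otimes>\<nu>)\<^sup>2)\<close> equals the linearised
  functional plus a constant independent of \<open>\<pi>\<close>, at least for those \<open>\<pi>\<close> that integrate the
  positive part of the \<open>\<lambda>\<close>-cost; for the others the two functionals are not comparable in
  extended arithmetic. This restriction is removed by approximating a competitor by its
  restrictions to the sublevel sets of the positive cost: the cost integrals converge by
  monotone convergence, and discarding mass \<open>h\<close> from a measure increases its KL divergence
  from a reference measure of mass \<open>m\<close> by at most \<open>h - h log(h/m)\<close>, which tends to \<open>0\<close>.
  If some entropy of \<open>\<gamma>\<close> is infinite, the objective is finite only at null measures, so the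
  minimiser is null, and every competitor is either null or has infinite cost.
\<close>

section \<open>Masses and extended integrals\<close>

lemma mass_nonneg: "0 \<le> mass M"
  by (simp add: mass_def)

lemma mass_eq_0_iff: "finite_measure M \<Longrightarrow> mass M = 0 \<longleftrightarrow> emeasure M (space M) = 0"
  by (simp add: mass_def finite_measure.emeasure_eq_measure)

lemma enn2ereal_diff_eq_diff:
  fixes A B C D :: ennreal
  assumes "A + D = B + C" and "(B \<noteq> \<infinity> \<and> D \<noteq> \<infinity>) \<or> (A \<noteq> \<infinity> \<and> C \<noteq> \<infinity>)"
  shows "enn2ereal A - enn2ereal B = enn2ereal C - enn2ereal D"
  using assms
  by (cases A rule: ennreal_cases; cases B rule: ennreal_cases;
      cases C rule: ennreal_cases; cases D rule: ennreal_cases)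
     (auto simp flip: ennreal_plus simp: algebra_simps)

lemma ennreal_parts_of_sum:
  fixes u w :: real
  shows "ennreal (u + w) + ennreal (- u) + ennreal (- w) = ennreal (- (u + w)) + ennreal u + ennreal w"
proof -
  have part: "ennreal t = ennreal (max t 0)" for t by (simp add: ennreal_neg max_def)
  have "max (u + w) 0 + max (- u) 0 + max (- w) 0 = max (- (u + w)) 0 + max u 0 + max w 0"
    by (simp add: max_def)
  then show ?thesis
    by (subst (1 2 3 4 5 6) part) (simp flip: ennreal_plus)
qed

lemma eint_ereal:
  "eint M (\<lambda>x. ereal (u x)) =
     enn2ereal (\<integral>\<^sup>+x. ennreal (u x) \<partial>M) - enn2ereal (\<integral>\<^sup>+x. ennreal (- u x) \<partial>M)"
  by (simp add: eint_def)

lemma eint_add: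
  fixes u w :: "'a \<Rightarrow> real"
  assumes [measurable]: "u \<in> borel_measurable M" "w \<in> borel_measurable M"
    and neg_u: "(\<integral>\<^sup>+x. ennreal (- u x) \<partial>M) \<noteq> \<infinity>"
    and neg_w: "(\<integral>\<^sup>+x. ennreal (- w x) \<partial>M) \<noteq> \<infinity>"
  shows "eint M (\<lambda>x. ereal (u x + w x)) = eint M (\<lambda>x. ereal (u x)) + eint M (\<lambda>x. ereal (w x))"
proof -
  let ?A = "\<integral>\<^sup>+x. ennreal (u x + w x) \<partial>M" and ?D = "\<integral>\<^sup>+x. ennreal (- (u x + w x)) \<partial>M"
  let ?E = "\<integral>\<^sup>+x. ennreal (u x) \<partial>M" and ?B = "\<integral>\<^sup>+x. ennreal (- u x) \<partial>M"
  let ?F = "\<integral>\<^sup>+x. ennreal (w x) \<partial>M" and ?C = "\<integral>\<^sup>+x. ennreal (- w x) \<partial>M"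
  have "?A + (?B + ?C) = \<integral>\<^sup>+x. ennreal (u x + w x) + ennreal (- u x) + ennreal (- w x) \<partial>M"
    by (simp add: nn_integral_add add.assoc)
  also have "\<dots> = \<integral>\<^sup>+x. ennreal (- (u x + w x)) + ennreal (u x) + ennreal (w x) \<partial>M"
    by (simp only: ennreal_parts_of_sum)
  also have "\<dots> = ?D + (?E + ?F)"
    by (simp add: nn_integral_add add.assoc)
  finally have parts: "?A + (?B + ?C) = ?D + (?E + ?F)" .
  have "?D \<le> \<integral>\<^sup>+x. ennreal (- u x) + ennreal (- w x) \<partial>M"
    by (intro nn_integral_mono) (simp add: ennreal_leI ennreal_plus_if)
  also have "\<dots> = ?B + ?C" by (simp add: nn_integral_add)
  finally have "?D \<noteq> \<infinity>" using neg_u neg_w by (auto simp: top_unique)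
  with parts neg_u neg_w have "enn2ereal ?A - enn2ereal ?D = enn2ereal (?E + ?F) - enn2ereal (?B + ?C)"
    by (intro enn2ereal_diff_eq_diff) (auto simp: add.commute)
  with neg_u neg_w show ?thesis
    by (cases ?B rule: ennreal_cases; cases ?C rule: ennreal_cases;
        cases ?E rule: ennreal_cases; cases ?F rule: ennreal_cases)
       (auto simp: eint_ereal simp flip: ennreal_plus)
qed

lemma nn_integral_null_space:
  "emeasure M (space M) = 0 \<Longrightarrow> (\<integral>\<^sup>+x. f x \<partial>M) = 0"
  using emeasure_0_AE[of M] by (subst nn_integral_cong_AE[where v="\<lambda>_. 0"]) auto

lemma eint_null_space: "emeasure M (space M) = 0 \<Longrightarrow> eint M f = 0"
  by (simp add: eint_def nn_integral_null_space)

lemma eint_mono_AE: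
  assumes "AE x in M. u x \<le> v x"
  shows "eint M u \<le> eint M v"
proof -
  have "(\<integral>\<^sup>+x. e2ennreal (u x) \<partial>M) \<le> (\<integral>\<^sup>+x. e2ennreal (v x) \<partial>M)"
    using assms by (intro nn_integral_mono_AE) (auto elim!: eventually_mono intro: e2ennreal_mono)
  moreover have "(\<integral>\<^sup>+x. e2ennreal (- v x) \<partial>M) \<le> (\<integral>\<^sup>+x. e2ennreal (- u x) \<partial>M)"
    using assms by (intro nn_integral_mono_AE) (auto elim!: eventually_mono intro: e2ennreal_mono)
  ultimately show ?thesis unfolding eint_def
    by (intro ereal_minus_mono) (auto simp: less_eq_ennreal.rep_eq)
qed

lemma eint_cong_AE: "AE x in M. u x = v x \<Longrightarrow> eint M u = eint M v"
  by (intro antisym eint_mono_AE) (auto elim!: eventually_mono)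

lemma eint_integrable:
  assumes "integrable M u"
  shows "eint M (\<lambda>x. ereal (u x)) = ereal (integral\<^sup>L M u)"
proof -
  from integrableE[OF assms] obtain r q where "0 \<le> r" "0 \<le> q"
    "(\<integral>\<^sup>+x. ennreal (u x) \<partial>M) = ennreal r" "(\<integral>\<^sup>+x. ennreal (- u x) \<partial>M) = ennreal q"
    "integral\<^sup>L M u = r - q"
    by metis
  then show ?thesis by (simp add: eint_ereal)
qed

lemma nn_integral_density_real:
  assumes [measurable]: "f \<in> borel_measurable M" "u \<in> borel_measurable M"
    and fin: "AE x in M. f x \<noteq> \<infinity>"
  shows "(\<integral>\<^sup>+x. ennreal (u x) \<partial>density M f) = (\<integral>\<^sup>+x. ennreal (enn2real (f x) * u x) \<partial>M)"
proof -
  have "(\<integral>\<^sup>+x. ennreal (u x) \<partial>density M f) = (\<integral>\<^sup>+x. f x * ennreal (u x) \<partial>M)"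
    by (simp add: nn_integral_density)
  also have "\<dots> = (\<integral>\<^sup>+x. ennreal (enn2real (f x) * u x) \<partial>M)"
    using fin by (intro nn_integral_cong_AE)
      (auto elim!: eventually_mono simp: ennreal_mult'' ennreal_enn2real_if mult.commute)
  finally show ?thesis .
qed

lemma eint_density:
  assumes [measurable]: "f \<in> borel_measurable M" "u \<in> borel_measurable M"
    and "AE x in M. f x \<noteq> \<infinity>"
  shows "eint (density M f) (\<lambda>x. ereal (u x)) = eint M (\<lambda>x. ereal (enn2real (f x) * u x))"
  using nn_integral_density_real[OF assms(1) _ assms(3), of u]
    nn_integral_density_real[OF assms(1) _ assms(3), of "\<lambda>x. - u x"]
  by (simp add: eint_ereal)

lemma eint_enn2ereal_diff:
  fixes P N :: "'a \<Rightarrow> ennreal"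
  assumes [measurable]: "P \<in> borel_measurable M" "N \<in> borel_measurable M"
    and P_fin: "(\<integral>\<^sup>+x. P x \<partial>M) \<noteq> \<infinity>"
  shows "eint M (\<lambda>x. enn2ereal (P x) - enn2ereal (N x))
       = enn2ereal (\<integral>\<^sup>+x. P x \<partial>M) - enn2ereal (\<integral>\<^sup>+x. N x \<partial>M)"
proof -
  let ?f = "\<lambda>x. enn2ereal (P x) - enn2ereal (N x)"
  have "e2ennreal (?f x) + N x = e2ennreal (- ?f x) + P x" if "P x \<noteq> \<infinity>" for x
    using that by (cases "P x" rule: ennreal_cases; cases "N x" rule: ennreal_cases)
      (auto simp: ennreal_plus_if)
  moreover have "AE x in M. P x \<noteq> \<infinity>" using P_fin by (intro nn_integral_noteq_infinite) auto
  ultimately have "AE x in M. e2ennreal (?f x) + N x = e2ennreal (- ?f x) + P x"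
    by (auto elim!: eventually_mono)
  then have parts: "(\<integral>\<^sup>+x. e2ennreal (?f x) \<partial>M) + (\<integral>\<^sup>+x. N x \<partial>M)
      = (\<integral>\<^sup>+x. e2ennreal (- ?f x) \<partial>M) + (\<integral>\<^sup>+x. P x \<partial>M)"
    by (simp add: nn_integral_add[symmetric] cong: nn_integral_cong_AE)
  have "(\<integral>\<^sup>+x. e2ennreal (?f x) \<partial>M) \<le> (\<integral>\<^sup>+x. P x \<partial>M)"
    by (intro nn_integral_mono) auto
  with P_fin have "(\<integral>\<^sup>+x. e2ennreal (?f x) \<partial>M) \<noteq> \<infinity>" by (auto simp: top_unique)
  with parts P_fin show ?thesis
    unfolding eint_def by (intro enn2ereal_diff_eq_diff) auto
qed

lemma eint_enn2ereal_diff_add_const: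
  fixes P N :: "'a \<Rightarrow> ennreal"
  assumes "finite_measure M" and [measurable]: "P \<in> borel_measurable M" "N \<in> borel_measurable M"
    and P_fin: "(\<integral>\<^sup>+x. P x \<partial>M) \<noteq> \<infinity>"
  shows "eint M (\<lambda>x. enn2ereal (P x) - enn2ereal (N x) + ereal k)
       = enn2ereal (\<integral>\<^sup>+x. P x \<partial>M) - enn2ereal (\<integral>\<^sup>+x. N x \<partial>M) + ereal (k * mass M)"
proof -
  interpret finite_measure M by fact
  have shift: "enn2ereal p - enn2ereal n + ereal k
      = enn2ereal (p + ennreal k) - enn2ereal (n + ennreal (- k))" for p n :: ennreal
    by (cases p rule: ennreal_cases; cases n rule: ennreal_cases) (auto simp: ennreal_plus_if)
  have mass: "emeasure M (space M) = ennreal (mass M)"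
    by (simp add: mass_def emeasure_eq_measure)
  have "eint M (\<lambda>x. enn2ereal (P x) - enn2ereal (N x) + ereal k)
      = enn2ereal (\<integral>\<^sup>+x. P x + ennreal k \<partial>M) - enn2ereal (\<integral>\<^sup>+x. N x + ennreal (- k) \<partial>M)"
    unfolding shift using P_fin
    by (intro eint_enn2ereal_diff) (auto simp: nn_integral_add ennreal_mult_eq_top_iff)
  also have "\<dots> = enn2ereal (\<integral>\<^sup>+x. P x \<partial>M) - enn2ereal (\<integral>\<^sup>+x. N x \<partial>M) + ereal (k * mass M)"
    using P_fin mass_nonneg[of M] mult_nonpos_nonneg[of k "mass M"]
    by (cases "\<integral>\<^sup>+x. P x \<partial>M" rule: ennreal_cases; cases "\<integral>\<^sup>+x. N x \<partial>M" rule: ennreal_cases;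
        cases "0 \<le> k")
      (auto simp: nn_integral_add mass ennreal_neg simp flip: ennreal_mult'' ennreal_plus)
  finally show ?thesis .
qed

lemma nn_integral_restrict_LIMSEQ:
  fixes g :: "'a \<Rightarrow> ennreal" and A :: "nat \<Rightarrow> 'a set"
  assumes [measurable]: "g \<in> borel_measurable M" "\<And>n. A n \<in> sets M"
    and "incseq A" and cover: "AE x in M. x \<in> (\<Union>n. A n)"
  shows "(\<lambda>n. \<integral>\<^sup>+x. g x \<partial>density M (indicator (A n))) \<longlonglongrightarrow> (\<integral>\<^sup>+x. g x \<partial>M)"
proof -
  have "(\<lambda>n. \<integral>\<^sup>+x. indicator (A n) x * g x \<partial>M) \<longlonglongrightarrow> (\<integral>\<^sup>+x. indicator (\<Union>n. A n) x * g x \<partial>M)"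
  proof (rule nn_integral_LIMSEQ)
    show "incseq (\<lambda>n x. indicator (A n) x * g x)"
      using \<open>incseq A\<close> unfolding incseq_def le_fun_def
      by (auto intro!: mult_right_mono simp: indicator_def subset_eq)
    show "(\<lambda>n. indicator (A n) x * g x) \<longlonglongrightarrow> indicator (\<Union>n. A n) x * g x" for x
    proof (cases "x \<in> (\<Union>n. A n)")
      case True
      then obtain n0 where "x \<in> A n0" by auto
      then have "\<forall>n\<ge>n0. x \<in> A n" using \<open>incseq A\<close> by (auto simp: incseq_def)
      then have "\<forall>n\<ge>n0. indicator (A n) x * g x = indicator (\<Union>n. A n) x * g x"
        using True by simp
      then show ?thesis by (intro tendsto_eventually) (auto simp: eventually_sequentially)
    qed (auto simp: indicator_def)
  qed measurable
  also have "(\<integral>\<^sup>+x. indicator (\<Union>n. A n) x * g x \<partial>M) = (\<integral>\<^sup>+x. g x \<partial>M)"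
    using cover by (intro nn_integral_cong_AE) (auto elim!: eventually_mono simp: indicator_def)
  finally show ?thesis by (simp add: nn_integral_density)
qed

lemma eint_restrict_LIMSEQ:
  fixes f :: "'a \<Rightarrow> ereal" and A :: "nat \<Rightarrow> 'a set"
  assumes [measurable]: "f \<in> borel_measurable M" "\<And>n. A n \<in> sets M"
    and "incseq A" "AE x in M. x \<in> (\<Union>n. A n)"
    and pos_fin: "(\<integral>\<^sup>+x. e2ennreal (f x) \<partial>M) \<noteq> \<infinity>"
  shows "(\<lambda>n. eint (density M (indicator (A n))) f) \<longlonglongrightarrow> eint M f"
  unfolding eint_def
proof (rule tendsto_diff_ereal_general)
  show "(\<lambda>n. enn2ereal (\<integral>\<^sup>+x. e2ennreal (f x) \<partial>density M (indicator (A n))))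
      \<longlonglongrightarrow> enn2ereal (\<integral>\<^sup>+x. e2ennreal (f x) \<partial>M)"
   and "(\<lambda>n. enn2ereal (\<integral>\<^sup>+x. e2ennreal (- f x) \<partial>density M (indicator (A n))))
      \<longlonglongrightarrow> enn2ereal (\<integral>\<^sup>+x. e2ennreal (- f x) \<partial>M)"
    unfolding tendsto_enn2ereal_iff using assms by (intro nn_integral_restrict_LIMSEQ; measurable)+
  show "\<not> ((enn2ereal (\<integral>\<^sup>+x. e2ennreal (f x) \<partial>M) = \<infinity> \<and> enn2ereal (\<integral>\<^sup>+x. e2ennreal (- f x) \<partial>M) = \<infinity>) \<or>
         (enn2ereal (\<integral>\<^sup>+x. e2ennreal (f x) \<partial>M) = -\<infinity> \<and> enn2ereal (\<integral>\<^sup>+x. e2ennreal (- f x) \<partial>M) = -\<infinity>))"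
    using pos_fin by (cases "\<integral>\<^sup>+x. e2ennreal (f x) \<partial>M" rule: ennreal_cases) auto
qed

section \<open>The function \<open>x log x\<close>\<close>

lemma neg_xlnx_le_one: "0 \<le> t \<Longrightarrow> - (t * ln t) \<le> (1::real)"
  using ln_le_minus_one[of "1 / t"] by (cases "t = 0") (auto simp: ln_div field_simps)

lemma xlnx_superadditive:
  fixes x y :: real
  assumes "0 \<le> x" "0 \<le> y"
  shows "x * ln x + y * ln y \<le> (x + y) * ln (x + y)"
proof (cases "x = 0 \<or> y = 0")
  case False
  with assms have "x * ln x \<le> x * ln (x + y)" "y * ln y \<le> y * ln (x + y)"
    by (auto intro!: mult_left_mono)
  then show ?thesis by (simp add: distrib_right)
qed auto

lemma xlnx_ge_affine:
  fixes y k :: real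
  assumes "0 \<le> y" "0 < k"
  shows "y * ln k + y - k \<le> y * ln y"
proof (cases "y = 0")
  case False
  with assms have "y * ln (k / y) \<le> y * (k / y - 1)"
    by (intro mult_left_mono ln_le_minus_one) auto
  moreover have "y * (k / y - 1) = k - y" using False by (simp add: field_simps)
  moreover have "y * ln (k / y) = y * ln k - y * ln y"
    using False assms by (simp add: ln_div algebra_simps)
  ultimately show ?thesis by simp
qed (use assms in simp)

lemma abs_xlnx_le_sqrt:
  fixes h :: real
  assumes "0 \<le> h" "h \<le> 1"
  shows "\<bar>h * ln h\<bar> \<le> 2 * sqrt h"
proof (cases "h = 0")
  case False
  with assms have h: "0 < h" by simp
  have "ln (1 / sqrt h) \<le> 1 / sqrt h - 1" using h by (intro ln_le_minus_one) simp
  moreover have "ln (1 / sqrt h) = - ln h / 2" using h by (simp add: ln_div ln_sqrt)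
  ultimately have "- ln h \<le> 2 / sqrt h" by (simp add: field_simps)
  then have "h * (- ln h) \<le> h * (2 / sqrt h)" using h by (intro mult_left_mono) auto
  also have "h * (2 / sqrt h) = 2 * sqrt h"
    using h by (simp add: field_simps real_sqrt_mult[symmetric] del: real_sqrt_mult)
  finally have "- (h * ln h) \<le> 2 * sqrt h" by simp
  moreover have "h * ln h \<le> 0" using assms h by (intro mult_nonneg_nonpos) auto
  ultimately show ?thesis by simp
qed simp

lemma entropy_defect_LIMSEQ:
  fixes h :: "nat \<Rightarrow> real"
  assumes h: "h \<longlonglongrightarrow> 0" "\<And>n. 0 \<le> h n" and "0 \<le> c"
  shows "(\<lambda>n. h n - h n * ln (h n / c)) \<longlonglongrightarrow> 0"
proof (cases "c = 0")
  case True
  then show ?thesis using h(1) by simp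
next
  case False
  have xlnx: "(\<lambda>n. h n * ln (h n)) \<longlonglongrightarrow> 0"
  proof (rule Lim_null_comparison)
    have "eventually (\<lambda>n. h n < 1) sequentially" using h(1) by (rule order_tendstoD) simp
    then show "eventually (\<lambda>n. norm (h n * ln (h n)) \<le> 2 * sqrt (h n)) sequentially"
      by eventually_elim (use h(2) abs_xlnx_le_sqrt in auto)
    show "(\<lambda>n. 2 * sqrt (h n)) \<longlonglongrightarrow> 0"
      using tendsto_mult[OF tendsto_const tendsto_real_sqrt[OF h(1)], of 2] by simp
  qed
  have "(\<lambda>n. h n - (h n * ln (h n) - h n * ln c)) \<longlonglongrightarrow> 0 - (0 - 0 * ln c)"
    by (intro tendsto_intros h(1) xlnx)
  moreover have "h n * ln (h n / c) = h n * ln (h n) - h n * ln c" for n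
    using h(2)[of n] \<open>0 \<le> c\<close> False by (cases "h n = 0") (auto simp: ln_div algebra_simps)
  ultimately show ?thesis by simp
qed

section \<open>Entropy integrals and Kullback-Leibler divergence\<close>

locale abs_cont_finite =
  fixes a c :: "'a measure"
  assumes finite_a: "finite_measure a" and finite_c: "finite_measure c"
    and sets_eq: "sets a = sets c" and abs_cont: "absolutely_continuous c a"
begin

definition rn :: "'a \<Rightarrow> real" where "rn x = enn2real (RN_deriv c a x)"

lemma density_RN_deriv_eq: "density c (RN_deriv c a) = a"
proof -
  interpret c: finite_measure c by (rule finite_c)
  show ?thesis using abs_cont sets_eq by (intro c.density_RN_deriv) auto
qed

lemma RN_deriv_finite_AE: "AE x in c. RN_deriv c a x \<noteq> \<infinity>"
proof -
  interpret c: finite_measure c by (rule finite_c)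
  interpret a: finite_measure a by (rule finite_a)
  show ?thesis using abs_cont sets_eq by (intro c.RN_deriv_finite a.sigma_finite_measure_axioms) auto
qed

lemma rn_measurable [measurable]: "rn \<in> borel_measurable c"
  unfolding rn_def by measurable

lemma rn_measurable_a [measurable]: "rn \<in> borel_measurable a"
  using rn_measurable by (simp cong: measurable_cong_sets[OF sets_eq refl])

lemma rn_nonneg: "0 \<le> rn x"
  by (simp add: rn_def)

lemma logint_eq_ln_rn: "logint a c = eint a (\<lambda>x. ereal (ln (rn x)))"
  using sets_eq abs_cont by (simp add: logint_def rn_def)

lemma logint_eq_xlnx_rn: "logint a c = eint c (\<lambda>x. ereal (rn x * ln (rn x)))"
  using logint_eq_ln_rn RN_deriv_finite_AE
  by (subst (asm) density_RN_deriv_eq[symmetric]) (simp add: eint_density rn_def)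

lemma nn_integral_neg_xlnx_rn_finite:
  "(\<integral>\<^sup>+x. ennreal (- (rn x * ln (rn x))) \<partial>c) \<noteq> \<infinity>"
proof -
  have "(\<integral>\<^sup>+x. ennreal (- (rn x * ln (rn x))) \<partial>c) \<le> (\<integral>\<^sup>+x. 1 \<partial>c)"
    by (intro nn_integral_mono) (use neg_xlnx_le_one[OF rn_nonneg] in \<open>auto intro: ennreal_leI\<close>)
  then show ?thesis
    using finite_measure.emeasure_finite[OF finite_c, of "space c"] by (auto simp: top_unique)
qed

lemma nn_integral_neg_ln_rn_finite: "(\<integral>\<^sup>+x. ennreal (- ln (rn x)) \<partial>a) \<noteq> \<infinity>"
proof -
  have "(\<integral>\<^sup>+x. ennreal (- ln (rn x)) \<partial>a) = (\<integral>\<^sup>+x. ennreal (- (rn x * ln (rn x))) \<partial>c)"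
    using RN_deriv_finite_AE
    by (subst density_RN_deriv_eq[symmetric]) (simp add: nn_integral_density_real rn_def)
  then show ?thesis using nn_integral_neg_xlnx_rn_finite by simp
qed

lemma logint_neq_minf: "logint a c \<noteq> -\<infinity>"
  using nn_integral_neg_xlnx_rn_finite unfolding logint_eq_xlnx_rn eint_ereal
  by (cases "\<integral>\<^sup>+x. ennreal (- (rn x * ln (rn x))) \<partial>c" rule: ennreal_cases;
      cases "\<integral>\<^sup>+x. ennreal (rn x * ln (rn x)) \<partial>c" rule: ennreal_cases) auto

lemma rn_pos_AE: "AE x in a. 0 < rn x"
proof -
  have "AE x in density c (RN_deriv c a). 0 < rn x"
    using RN_deriv_finite_AE by (subst AE_density)
      (auto simp: rn_def enn2real_positive_iff less_top elim!: eventually_mono)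
  then show ?thesis unfolding density_RN_deriv_eq .
qed

lemma nn_integral_rn: "(\<integral>\<^sup>+x. ennreal (rn x) \<partial>c) = emeasure a (space a)"
proof -
  have "(\<integral>\<^sup>+x. ennreal (rn x) \<partial>c) = (\<integral>\<^sup>+x. RN_deriv c a x \<partial>c)"
    using RN_deriv_finite_AE
    by (intro nn_integral_cong_AE) (auto simp: rn_def ennreal_enn2real_if elim!: eventually_mono)
  also have "\<dots> = emeasure (density c (RN_deriv c a)) (space c)"
    by (simp add: emeasure_density)
  finally show ?thesis
    using density_RN_deriv_eq sets_eq_imp_space_eq[OF sets_eq] by simp
qed

lemma integrable_rn: "integrable c rn"
  using nn_integral_rn finite_measure.emeasure_finite[OF finite_a, of "space a"]
  by (auto simp: real_integrable_def ennreal_neg rn_nonneg)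

lemma integral_rn: "integral\<^sup>L c rn = mass a"
  using nn_integral_rn by (simp add: integral_eq_nn_integral rn_nonneg mass_def measure_def)

end

lemma emeasure_space_pair_measure:
  assumes "finite_measure a" "finite_measure b"
  shows "emeasure (a \<Otimes>\<^sub>M b) (space (a \<Otimes>\<^sub>M b)) = emeasure a (space a) * emeasure b (space b)"
proof -
  interpret b: finite_measure b by fact
  show ?thesis by (simp add: space_pair_measure b.emeasure_pair_measure_Times)
qed

lemma mass_pair_measure:
  assumes "finite_measure a" "finite_measure b"
  shows "mass (a \<Otimes>\<^sub>M b) = mass a * mass b"
  using emeasure_space_pair_measure[OF assms]
  by (simp add: mass_def measure_def enn2real_mult)

lemma logint_null_space:
  assumes "sets a = sets c" "emeasure a (space a) = 0"
  shows "logint a c = 0"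
proof -
  have "emeasure a A = 0" if "A \<in> sets a" for A
    using emeasure_mono[OF sets.sets_into_space[OF that] sets.top] assms(2) by simp
  then have "absolutely_continuous c a"
    using assms(1) by (auto simp: absolutely_continuous_def null_sets_def)
  then show ?thesis using assms by (simp add: logint_def eint_null_space)
qed

lemma logint_neq_minf:
  assumes "finite_measure a" "finite_measure c" "sets a = sets c"
  shows "logint a c \<noteq> -\<infinity>"
proof (cases "absolutely_continuous c a")
  case True
  with assms show ?thesis by (intro abs_cont_finite.logint_neq_minf abs_cont_finite.intro)
qed (simp add: logint_def)

lemma nn_integral_pair_measure_fst:
  assumes "finite_measure b" and [measurable]: "h \<in> borel_measurable a"
  shows "(\<integral>\<^sup>+z. h (fst z) \<partial>(a \<Otimes>\<^sub>M b)) = emeasure b (space b) * (\<integral>\<^sup>+x. h x \<partial>a)"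
proof -
  interpret b: finite_measure b by fact
  have "(\<integral>\<^sup>+z. h (fst z) \<partial>(a \<Otimes>\<^sub>M b)) = (\<integral>\<^sup>+x. h x * emeasure b (space b) \<partial>a)"
    by (subst b.nn_integral_fst[symmetric]) auto
  then show ?thesis by (simp add: nn_integral_multc mult.commute)
qed

lemma nn_integral_pair_measure_snd:
  assumes "finite_measure b" and [measurable]: "h \<in> borel_measurable b"
  shows "(\<integral>\<^sup>+z. h (snd z) \<partial>(a \<Otimes>\<^sub>M b)) = emeasure a (space a) * (\<integral>\<^sup>+y. h y \<partial>b)"
proof -
  interpret b: finite_measure b by fact
  show ?thesis by (subst b.nn_integral_fst[symmetric]) (auto simp: mult.commute)
qed

lemma eint_pair_measure_fst:
  assumes "finite_measure b" and [measurable]: "u \<in> borel_measurable a"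
    and neg: "(\<integral>\<^sup>+x. ennreal (- u x) \<partial>a) \<noteq> \<infinity>"
  shows "eint (a \<Otimes>\<^sub>M b) (\<lambda>z. ereal (u (fst z))) = ereal (mass b) * eint a (\<lambda>x. ereal (u x))"
  using neg finite_measure.emeasure_eq_measure[OF assms(1)]
  by (cases "\<integral>\<^sup>+x. ennreal (- u x) \<partial>a" rule: ennreal_cases)
    (auto simp: eint_ereal mass_def times_ennreal.rep_eq ereal_distrib_minus_left
      nn_integral_pair_measure_fst[OF assms(1), of "\<lambda>x. ennreal (u x)"]
      nn_integral_pair_measure_fst[OF assms(1), of "\<lambda>x. ennreal (- u x)"])

lemma eint_pair_measure_snd:
  assumes "finite_measure a" "finite_measure b" and [measurable]: "u \<in> borel_measurable b"
    and neg: "(\<integral>\<^sup>+y. ennreal (- u y) \<partial>b) \<noteq> \<infinity>"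
  shows "eint (a \<Otimes>\<^sub>M b) (\<lambda>z. ereal (u (snd z))) = ereal (mass a) * eint b (\<lambda>y. ereal (u y))"
  using neg finite_measure.emeasure_eq_measure[OF assms(1)]
  by (cases "\<integral>\<^sup>+y. ennreal (- u y) \<partial>b" rule: ennreal_cases)
    (auto simp: eint_ereal mass_def times_ennreal.rep_eq ereal_distrib_minus_left
      nn_integral_pair_measure_snd[OF assms(2), of "\<lambda>y. ennreal (u y)"]
      nn_integral_pair_measure_snd[OF assms(2), of "\<lambda>y. ennreal (- u y)"])

lemma abs_cont_pair_measure_fst:
  assumes "finite_measure b" "finite_measure d" "sets a = sets c" "sets b = sets d"
    and ac: "absolutely_continuous (c \<Otimes>\<^sub>M d) (a \<Otimes>\<^sub>M b)" and "emeasure b (space b) \<noteq> 0"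
  shows "absolutely_continuous c a"
  unfolding absolutely_continuous_def
proof
  interpret b: finite_measure b by fact
  interpret d: finite_measure d by fact
  fix A assume A: "A \<in> null_sets c"
  then have "A \<times> space d \<in> null_sets (c \<Otimes>\<^sub>M d)"
    by (auto simp: d.emeasure_pair_measure_Times null_sets_def)
  then have "A \<times> space b \<in> null_sets (a \<Otimes>\<^sub>M b)"
    using ac sets_eq_imp_space_eq[OF assms(4)] by (auto simp: absolutely_continuous_def)
  then have "emeasure a A * emeasure b (space b) = 0"
    using A assms(3) by (simp add: b.emeasure_pair_measure_Times null_sets_def)
  then show "A \<in> null_sets a" using A assms(3,6) by (simp add: null_sets_def)
qed

lemma abs_cont_pair_measure_snd:
  assumes "finite_measure b" "finite_measure d" "sets a = sets c" "sets b = sets d"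
    and ac: "absolutely_continuous (c \<Otimes>\<^sub>M d) (a \<Otimes>\<^sub>M b)" and "emeasure a (space a) \<noteq> 0"
  shows "absolutely_continuous d b"
  unfolding absolutely_continuous_def
proof
  interpret b: finite_measure b by fact
  interpret d: finite_measure d by fact
  fix B assume B: "B \<in> null_sets d"
  then have "space c \<times> B \<in> null_sets (c \<Otimes>\<^sub>M d)"
    by (auto simp: d.emeasure_pair_measure_Times null_sets_def)
  then have "space a \<times> B \<in> null_sets (a \<Otimes>\<^sub>M b)"
    using ac sets_eq_imp_space_eq[OF assms(3)] by (auto simp: absolutely_continuous_def)
  then have "emeasure a (space a) * emeasure b B = 0"
    using B assms(4) by (simp add: b.emeasure_pair_measure_Times null_sets_def)
  then show "B \<in> null_sets b" using B assms(4,6) by (simp add: null_sets_def)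
qed

lemma logint_pair_measure_abs_cont:
  assumes ac: "abs_cont_finite a c" "abs_cont_finite b d"
  shows "logint (a \<Otimes>\<^sub>M b) (c \<Otimes>\<^sub>M d) = ereal (mass b) * logint a c + ereal (mass a) * logint b d"
proof -
  interpret ac: abs_cont_finite a c by (fact ac)
  interpret bd: abs_cont_finite b d by (fact ac)
  interpret c: finite_measure c by (rule ac.finite_c)
  interpret d: finite_measure d by (rule bd.finite_c)
  interpret a: finite_measure a by (rule ac.finite_a)
  interpret b: finite_measure b by (rule bd.finite_a)
  interpret cd: pair_sigma_finite c d ..
  interpret ab: pair_sigma_finite a b ..
  have sets_ab: "sets (a \<Otimes>\<^sub>M b) = sets (c \<Otimes>\<^sub>M d)"
    using ac.sets_eq bd.sets_eq by (rule sets_pair_measure_cong)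
  have dens: "a \<Otimes>\<^sub>M b = density (c \<Otimes>\<^sub>M d) (\<lambda>(x, y). RN_deriv c a x * RN_deriv d b y)"
  proof -
    have "a \<Otimes>\<^sub>M b = density c (RN_deriv c a) \<Otimes>\<^sub>M density d (RN_deriv d b)"
      by (simp add: ac.density_RN_deriv_eq bd.density_RN_deriv_eq)
    also have "\<dots> = density (c \<Otimes>\<^sub>M d) (\<lambda>(x, y). RN_deriv c a x * RN_deriv d b y)"
      by (rule pair_measure_density)
        (auto simp: bd.density_RN_deriv_eq intro: d.sigma_finite_measure_axioms b.sigma_finite_measure_axioms)
    finally show ?thesis .
  qed
  have ac_ab: "absolutely_continuous (c \<Otimes>\<^sub>M d) (a \<Otimes>\<^sub>M b)"
    unfolding dens by (rule absolutely_continuousI_density) measurable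
  have "AE z in c \<Otimes>\<^sub>M d. (\<lambda>(x, y). RN_deriv c a x * RN_deriv d b y) z = RN_deriv (c \<Otimes>\<^sub>M d) (a \<Otimes>\<^sub>M b) z"
    by (rule cd.RN_deriv_unique) (auto simp: dens)
  then have RN_eq: "AE z in a \<Otimes>\<^sub>M b. RN_deriv (c \<Otimes>\<^sub>M d) (a \<Otimes>\<^sub>M b) z = RN_deriv c a (fst z) * RN_deriv d b (snd z)"
    by (auto dest: absolutely_continuous_AE[OF sets_ab ac_ab] elim!: eventually_mono)
  have pos: "AE z in a \<Otimes>\<^sub>M b. 0 < ac.rn (fst z) \<and> 0 < bd.rn (snd z)"
    using ac.rn_pos_AE bd.rn_pos_AE by (intro ab.AE_pair_measure) (auto elim!: eventually_mono)
  have "logint (a \<Otimes>\<^sub>M b) (c \<Otimes>\<^sub>M d)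
      = eint (a \<Otimes>\<^sub>M b) (\<lambda>z. ereal (ln (enn2real (RN_deriv (c \<Otimes>\<^sub>M d) (a \<Otimes>\<^sub>M b) z))))"
    using sets_ab ac_ab by (simp add: logint_def)
  also have "\<dots> = eint (a \<Otimes>\<^sub>M b) (\<lambda>z. ereal (ln (ac.rn (fst z)) + ln (bd.rn (snd z))))"
  proof (intro eint_cong_AE, use RN_eq pos in eventually_elim)
    case (elim z)
    then show ?case by (simp add: ac.rn_def bd.rn_def enn2real_mult ln_mult)
  qed
  also have "\<dots> = eint (a \<Otimes>\<^sub>M b) (\<lambda>z. ereal (ln (ac.rn (fst z)))) + eint (a \<Otimes>\<^sub>M b) (\<lambda>z. ereal (ln (bd.rn (snd z))))"
  proof (rule eint_add)
    show "(\<integral>\<^sup>+z. ennreal (- ln (ac.rn (fst z))) \<partial>(a \<Otimes>\<^sub>M b)) \<noteq> \<infinity>"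
      using ac.nn_integral_neg_ln_rn_finite b.emeasure_finite[of "space b"]
      by (simp add: nn_integral_pair_measure_fst[OF bd.finite_a, of "\<lambda>x. ennreal (- ln (ac.rn x))"]
          ennreal_mult_eq_top_iff)
    show "(\<integral>\<^sup>+z. ennreal (- ln (bd.rn (snd z))) \<partial>(a \<Otimes>\<^sub>M b)) \<noteq> \<infinity>"
      using bd.nn_integral_neg_ln_rn_finite a.emeasure_finite[of "space a"]
      by (simp add: nn_integral_pair_measure_snd[OF bd.finite_a, of "\<lambda>y. ennreal (- ln (bd.rn y))"]
          ennreal_mult_eq_top_iff)
  qed measurable
  also have "\<dots> = ereal (mass b) * logint a c + ereal (mass a) * logint b d"
    by (simp add: eint_pair_measure_fst[OF bd.finite_a _ ac.nn_integral_neg_ln_rn_finite]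
        eint_pair_measure_snd[OF ac.finite_a bd.finite_a _ bd.nn_integral_neg_ln_rn_finite]
        ac.logint_eq_ln_rn bd.logint_eq_ln_rn)
  finally show ?thesis .
qed

lemma logint_pair_measure:
  assumes fin: "finite_measure a" "finite_measure b" "finite_measure c" "finite_measure d"
    and sets: "sets a = sets c" "sets b = sets d"
  shows "logint (a \<Otimes>\<^sub>M b) (c \<Otimes>\<^sub>M d) = ereal (mass b) * logint a c + ereal (mass a) * logint b d"
proof (cases "emeasure a (space a) = 0 \<or> emeasure b (space b) = 0")
  case True
  have "logint (a \<Otimes>\<^sub>M b) (c \<Otimes>\<^sub>M d) = 0"
    using True emeasure_space_pair_measure[OF fin(1,2)]
    by (intro logint_null_space sets_pair_measure_cong sets) auto
  moreover have "ereal (mass b) * logint a c + ereal (mass a) * logint b d = 0"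
    using True logint_null_space[OF sets(1)] logint_null_space[OF sets(2)]
      mass_eq_0_iff[OF fin(1)] mass_eq_0_iff[OF fin(2)]
    by auto
  ultimately show ?thesis by simp
next
  case False
  then have pos: "0 < mass a" "0 < mass b"
    using mass_eq_0_iff[OF fin(1)] mass_eq_0_iff[OF fin(2)] mass_nonneg[of a] mass_nonneg[of b]
    by auto
  have neq_minf: "logint a c \<noteq> -\<infinity>" "logint b d \<noteq> -\<infinity>"
    using logint_neq_minf fin sets by auto
  show ?thesis
  proof (cases "absolutely_continuous c a \<and> absolutely_continuous d b")
    case True
    then show ?thesis using fin sets by (intro logint_pair_measure_abs_cont abs_cont_finite.intro) auto
  next
    case not_ac: False
    then have "\<not> absolutely_continuous (c \<Otimes>\<^sub>M d) (a \<Otimes>\<^sub>M b)"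
      using abs_cont_pair_measure_fst[OF fin(2,4) sets] abs_cont_pair_measure_snd[OF fin(2,4) sets] False
      by blast
    then show ?thesis using not_ac pos neq_minf by (auto simp: logint_def)
  qed
qed

lemma abs_cont_mono:
  assumes "absolutely_continuous m a" "sets a = sets m" "sets b = sets m"
    and "\<And>A. A \<in> sets m \<Longrightarrow> emeasure b A \<le> emeasure a A"
  shows "absolutely_continuous m b"
  using assms by (fastforce simp: absolutely_continuous_def null_sets_def)

lemma RN_deriv_split_AE:
  assumes "abs_cont_finite a m" "abs_cont_finite b m" "abs_cont_finite r m"
    and split: "\<And>A. A \<in> sets m \<Longrightarrow> emeasure a A = emeasure b A + emeasure r A"
  shows "AE x in m. abs_cont_finite.rn a m x = abs_cont_finite.rn b m x + abs_cont_finite.rn r m x"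
proof -
  interpret a: abs_cont_finite a m by fact
  interpret b: abs_cont_finite b m by fact
  interpret r: abs_cont_finite r m by fact
  interpret m: finite_measure m by (rule a.finite_c)
  have "density m (\<lambda>x. RN_deriv m b x + RN_deriv m r x) = a"
  proof (rule measure_eqI)
    fix A assume "A \<in> sets (density m (\<lambda>x. RN_deriv m b x + RN_deriv m r x))"
    then have A: "A \<in> sets m" by simp
    have "emeasure (density m (\<lambda>x. RN_deriv m b x + RN_deriv m r x)) A
        = emeasure (density m (RN_deriv m b)) A + emeasure (density m (RN_deriv m r)) A"
      using A by (simp add: emeasure_density distrib_right nn_integral_add)
    then show "emeasure (density m (\<lambda>x. RN_deriv m b x + RN_deriv m r x)) A = emeasure a A"
      using A by (simp add: b.density_RN_deriv_eq r.density_RN_deriv_eq split)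
  qed (simp add: a.sets_eq)
  then have "AE x in m. RN_deriv m b x + RN_deriv m r x = RN_deriv m a x"
    by (intro m.RN_deriv_unique) measurable
  then show ?thesis
    using b.RN_deriv_finite_AE r.RN_deriv_finite_AE
    by eventually_elim (auto simp: a.rn_def b.rn_def r.rn_def enn2real_plus less_top[symmetric] dest: sym)
qed

lemma logint_le_split:
  assumes fin: "finite_measure a" "finite_measure b" "finite_measure r" "finite_measure m"
    and sets: "sets a = sets m" "sets b = sets m" "sets r = sets m"
    and split: "\<And>A. A \<in> sets m \<Longrightarrow> emeasure a A = emeasure b A + emeasure r A"
  shows "logint b m \<le> logint a m - ereal (mass r * ln (mass r / mass m))"
proof (cases "absolutely_continuous m a")
  case ac: True
  have "absolutely_continuous m b" "absolutely_continuous m r"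
    using split by (auto intro!: abs_cont_mono[OF ac sets(1)] sets)
  then interpret a: abs_cont_finite a m + b: abs_cont_finite b m + r: abs_cont_finite r m
    using fin sets ac by (auto intro!: abs_cont_finite.intro)
  show ?thesis
  proof (cases "mass r = 0")
    case True
    have "emeasure r A = 0" if "A \<in> sets m" for A
      using True mass_eq_0_iff[OF fin(3)] emeasure_mono[OF sets.sets_into_space sets.top, of A r]
        that sets(3)
      by simp
    then have "a = b" using sets split by (intro measure_eqI) auto
    then show ?thesis using True by simp
  next
    case False
    then have r_pos: "0 < mass r" using mass_nonneg[of r] by simp
    have "0 < mass m"
    proof (rule ccontr)
      assume "\<not> 0 < mass m"
      then have "space m \<in> null_sets m"
        using mass_eq_0_iff[OF fin(4)] mass_nonneg[of m] by auto
      then have "space r \<in> null_sets r"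
        using r.abs_cont sets_eq_imp_space_eq[OF sets(3)] by (auto simp: absolutely_continuous_def)
      then show False using r_pos mass_eq_0_iff[OF fin(3)] by auto
    qed
    define k where "k = mass r / mass m"
    have "0 < k" using r_pos \<open>0 < mass m\<close> by (simp add: k_def)
    have rn_split: "AE x in m. a.rn x = b.rn x + r.rn x"
      using split by (intro RN_deriv_split_AE) unfold_locales
    have integrable: "integrable m (\<lambda>x. (- ln k - 1) * r.rn x + k)"
      using r.integrable_rn fin(4) by (auto intro: finite_measure.integrable_const)
    have "logint b m = eint m (\<lambda>x. ereal (b.rn x * ln (b.rn x)))" by (rule b.logint_eq_xlnx_rn)
    txt \<open>Superadditivity of \<open>x log x\<close> removes \<open>r\<close>, whose entropy is then bounded below by
      the tangent of \<open>x log x\<close> at \<open>k\<close>.\<close>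
    also have "\<dots> \<le> eint m (\<lambda>x. ereal (a.rn x * ln (a.rn x) + ((- ln k - 1) * r.rn x + k)))"
    proof (intro eint_mono_AE, use rn_split in eventually_elim)
      case (elim x)
      then show ?case
        using xlnx_superadditive[OF b.rn_nonneg r.rn_nonneg, of x x]
          xlnx_ge_affine[OF r.rn_nonneg \<open>0 < k\<close>, of x]
        by (simp add: algebra_simps)
    qed
    also have "\<dots> = logint a m + eint m (\<lambda>x. ereal ((- ln k - 1) * r.rn x + k))"
      using a.nn_integral_neg_xlnx_rn_finite integrable
      by (subst eint_add) (auto simp: a.logint_eq_xlnx_rn dest: integrableD)
    also have "eint m (\<lambda>x. ereal ((- ln k - 1) * r.rn x + k)) = ereal ((- ln k - 1) * mass r + k * mass m)"
      using integrable r.integrable_rn r.integral_rn finite_measure.integrable_const[OF fin(4)]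
      by (subst eint_integrable, simp, subst Bochner_Integration.integral_add) (auto simp: mass_def)
    also have "(- ln k - 1) * mass r + k * mass m = - (mass r * ln (mass r / mass m))"
      using \<open>0 < mass m\<close> by (simp add: k_def algebra_simps)
    finally show ?thesis by (cases "logint a m") auto
  qed
qed (simp add: logint_def)

lemma KL_eq: "sets a = sets c \<Longrightarrow> KL a c = logint a c - ereal (mass a) + ereal (mass c)"
  by (simp add: KL_def logint_def)

lemma KL_neq_minf:
  assumes "finite_measure a" "finite_measure c" "sets a = sets c"
  shows "KL a c \<noteq> -\<infinity>"
  using logint_neq_minf[OF assms] by (cases "logint a c") (simp_all add: KL_eq[OF assms(3)])

lemma KL_null_space:
  assumes "sets a = sets c" "emeasure a (space a) = 0"
  shows "KL a c = ereal (mass c)"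
  using assms by (simp add: KL_eq logint_null_space mass_def measure_def)

lemma KL_le_split:
  assumes fin: "finite_measure a" "finite_measure b" "finite_measure r" "finite_measure m"
    and sets: "sets a = sets m" "sets b = sets m" "sets r = sets m"
    and split: "\<And>A. A \<in> sets m \<Longrightarrow> emeasure a A = emeasure b A + emeasure r A"
  shows "KL b m \<le> KL a m + ereal (mass r - mass r * ln (mass r / mass m))"
proof -
  have "emeasure a (space a) = emeasure b (space b) + emeasure r (space r)"
    using split[OF sets.top] sets_eq_imp_space_eq[OF sets(1)] sets_eq_imp_space_eq[OF sets(2)]
      sets_eq_imp_space_eq[OF sets(3)]
    by simp
  then have "mass a = mass b + mass r"
    using fin(1-3) by (simp add: mass_def finite_measure.emeasure_eq_measure flip: ennreal_plus)
  with logint_le_split[OF assms] logint_neq_minf[OF fin(2,4) sets(2)] show ?thesis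
    by (cases "logint a m"; cases "logint b m") (simp_all add: KL_eq sets)
qed

lemma KL_pair_measure_scaled:
  assumes fin: "finite_measure a" "finite_measure b" "finite_measure c" "finite_measure d"
    and sets: "sets a = sets c" "sets b = sets d"
    and "0 \<le> t" and ent: "t = 0 \<or> logint b d = ereal g"
  shows "ereal t * KL (a \<Otimes>\<^sub>M b) (c \<Otimes>\<^sub>M d)
       = ereal (t * mass b) * KL a c + ereal (t * (mass a * g + mass c * (mass d - mass b)))"
proof (cases "t = 0")
  case False
  with ent have g: "logint b d = ereal g" by simp
  have "KL (a \<Otimes>\<^sub>M b) (c \<Otimes>\<^sub>M d)
      = ereal (mass b) * logint a c + ereal (mass a * g) - ereal (mass a * mass b) + ereal (mass c * mass d)"
    by (simp add: KL_eq sets_pair_measure_cong[OF sets] logint_pair_measure[OF fin sets]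
        mass_pair_measure fin g)
  with \<open>0 \<le> t\<close> logint_neq_minf[OF fin(1,3) sets(1)] mass_nonneg[of b] show ?thesis
    by (cases "logint a c") (auto simp: KL_eq[OF sets(1)] algebra_simps ereal_mult_infty)
qed (simp add: zero_ereal_def[symmetric])

lemma KL_pair_measure_eq_infinity:
  assumes fin: "finite_measure a" "finite_measure b" "finite_measure c" "finite_measure d"
    and sets: "sets a = sets c" "sets b = sets d"
    and "mass a \<noteq> 0" "logint b d = \<infinity>"
  shows "KL (a \<Otimes>\<^sub>M b) (c \<Otimes>\<^sub>M d) = \<infinity>"
proof -
  have "ereal (mass b) * logint a c \<noteq> -\<infinity>"
    using logint_neq_minf[OF fin(1,3) sets(1)] mass_nonneg[of b] by (cases "logint a c") auto
  moreover have "ereal (mass a) * logint b d = \<infinity>"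
    using assms(7,8) mass_nonneg[of a] by simp
  ultimately have "logint (a \<Otimes>\<^sub>M b) (c \<Otimes>\<^sub>M d) = \<infinity>"
    by (simp add: logint_pair_measure[OF fin sets])
  then show ?thesis by (simp add: KL_eq sets_pair_measure_cong[OF sets])
qed

section \<open>Restrictions and marginals\<close>

lemma emeasure_density_indicator_split:
  assumes "A \<in> sets M" "X \<in> sets M"
  shows "emeasure M X
       = emeasure (density M (indicator A)) X + emeasure (density M (indicator (space M - A))) X"
proof -
  have "emeasure (density M (indicator A)) X + emeasure (density M (indicator (space M - A))) X
      = emeasure M (A \<inter> X \<union> (space M - A) \<inter> X)"
    using assms by (simp add: emeasure_restricted plus_emeasure Int_Diff Diff_Int_distrib2)
  also have "A \<inter> X \<union> (space M - A) \<inter> X = X" using sets.sets_into_space[OF assms(2)] by auto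
  finally show ?thesis by simp
qed

lemma KL_restrict_le:
  assumes "finite_measure \<sigma>" "A \<in> sets \<sigma>" "finite_measure m" "sets m = sets \<sigma>"
  defines "h \<equiv> measure \<sigma> (space \<sigma> - A)"
  shows "KL (density \<sigma> (indicator A)) m \<le> KL \<sigma> m + ereal (h - h * ln (h / mass m))"
proof -
  interpret finite_measure \<sigma> by fact
  let ?R = "density \<sigma> (indicator (space \<sigma> - A))"
  have "mass ?R = h"
    using assms(2) by (simp add: h_def mass_def measure_restricted Int_absorb2)
  moreover have "KL (density \<sigma> (indicator A)) m
      \<le> KL \<sigma> m + ereal (mass ?R - mass ?R * ln (mass ?R / mass m))"
    using assms(1-4) emeasure_density_indicator_split[OF assms(2)]
    by (intro KL_le_split finite_measure_restricted) auto
  ultimately show ?thesis by simp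
qed

lemma KL_distr_restrict_le:
  assumes "finite_measure \<sigma>" "A \<in> sets \<sigma>" "f \<in> measurable \<sigma> N" "finite_measure m" "sets m = sets N"
  defines "h \<equiv> measure \<sigma> (space \<sigma> - A)"
  shows "KL (distr (density \<sigma> (indicator A)) N f) m
       \<le> KL (distr \<sigma> N f) m + ereal (h - h * ln (h / mass m))"
proof -
  interpret finite_measure \<sigma> by fact
  let ?R = "density \<sigma> (indicator (space \<sigma> - A))"
  have f: "f \<in> measurable (density \<sigma> g) N" for g
    using assms(3) by (simp cong: measurable_cong_sets)
  have "f -` space N \<inter> space \<sigma> = space \<sigma>" using assms(3) by (auto dest: measurable_space)
  then have "mass (distr ?R N f) = h"
    using assms(2) f by (simp add: h_def mass_def measure_distr measure_restricted Int_absorb2)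
  moreover have "KL (distr (density \<sigma> (indicator A)) N f) m
      \<le> KL (distr \<sigma> N f) m
         + ereal (mass (distr ?R N f) - mass (distr ?R N f) * ln (mass (distr ?R N f) / mass m))"
  proof (rule KL_le_split)
    fix B assume "B \<in> sets m"
    then have "f -` B \<inter> space \<sigma> \<in> sets \<sigma>" using assms(3,5) by (simp add: measurable_sets)
    then show "emeasure (distr \<sigma> N f) B
        = emeasure (distr (density \<sigma> (indicator A)) N f) B + emeasure (distr ?R N f) B"
      using emeasure_density_indicator_split[OF assms(2)] \<open>B \<in> sets m\<close> assms(3,5) f
      by (simp add: emeasure_distr)
  qed (use assms f in \<open>auto intro!: finite_measure.finite_measure_distr finite_measure_restricted\<close>)
  ultimately show ?thesis by simp
qed

lemma sublevel_truncation:
  fixes g :: "'a \<Rightarrow> ennreal"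
  assumes "finite_measure M" and [measurable]: "g \<in> borel_measurable M"
    and g_fin: "AE x in M. g x \<noteq> \<infinity>"
  defines "A \<equiv> \<lambda>n::nat. {x \<in> space M. g x \<le> of_nat n}"
  shows "incseq A" and "AE x in M. x \<in> (\<Union>n. A n)"
    and "(\<lambda>n. measure M (space M - A n)) \<longlonglongrightarrow> 0"
    and "(\<integral>\<^sup>+x. g x \<partial>density M (indicator (A n))) \<noteq> \<infinity>"
proof -
  interpret finite_measure M by fact
  have [measurable]: "A n \<in> sets M" for n by (simp add: A_def)
  show "incseq A" by (auto simp: incseq_def A_def intro: order_trans)
  show cover: "AE x in M. x \<in> (\<Union>n. A n)"
    using g_fin AE_space
  proof eventually_elim
    case (elim x)
    then obtain n where "g x < of_nat n" using ennreal_Ex_less_of_nat[of "g x"] by (auto simp: less_top)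
    then show ?case using elim by (auto simp: A_def intro!: exI[of _ n])
  qed
  have "emeasure M (space M - (\<Union>n. A n)) = 0"
    using cover by (subst (asm) AE_iff_measurable[of "space M - (\<Union>n. A n)"]) auto
  then have null: "measure M (space M - (\<Union>n. A n)) = 0" by (simp add: measure_def)
  have "(\<lambda>n. measure M (space M - A n)) \<longlonglongrightarrow> measure M (\<Inter>n. space M - A n)"
    using \<open>incseq A\<close> by (intro finite_Lim_measure_decseq) (auto simp: decseq_def incseq_def)
  then show "(\<lambda>n. measure M (space M - A n)) \<longlonglongrightarrow> 0" using null by simp
  have "(\<integral>\<^sup>+x. g x \<partial>density M (indicator (A n))) = (\<integral>\<^sup>+x. indicator (A n) x * g x \<partial>M)"
    by (simp add: nn_integral_density)
  also have "\<dots> \<le> (\<integral>\<^sup>+x. of_nat n \<partial>M)"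
    by (intro nn_integral_mono) (auto simp: A_def indicator_def)
  also have "\<dots> < \<infinity>"
    using emeasure_finite[of "space M"] by (simp add: less_top[symmetric] ennreal_mult_eq_top_iff)
  finally show "(\<integral>\<^sup>+x. g x \<partial>density M (indicator (A n))) \<noteq> \<infinity>" by simp
qed

lemma MplusD:
  assumes "\<sigma> \<in> Mplus" shows "finite_measure \<sigma>" "sets \<sigma> = sets borel"
  using assms by (auto simp: Mplus_def)

lemma null_measure_Mplus: "null_measure borel \<in> Mplus"
  by (auto simp: Mplus_def intro!: finite_measureI simp: emeasure_null_measure)

lemma density_indicator_Mplus:
  "\<sigma> \<in> Mplus \<Longrightarrow> A \<in> sets \<sigma> \<Longrightarrow> density \<sigma> (indicator A) \<in> Mplus"
  by (auto simp: Mplus_def intro: finite_measure.finite_measure_restricted)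

lemma measurable_fst_borel:
  "sets \<sigma> = sets (borel :: ('a::second_countable_topology \<times> 'b::second_countable_topology) measure)
    \<Longrightarrow> fst \<in> measurable \<sigma> borel"
  by (simp add: borel_prod[symmetric] cong: measurable_cong_sets)

lemma measurable_snd_borel:
  "sets \<sigma> = sets (borel :: ('a::second_countable_topology \<times> 'b::second_countable_topology) measure)
    \<Longrightarrow> snd \<in> measurable \<sigma> borel"
  by (simp add: borel_prod[symmetric] cong: measurable_cong_sets)

lemma
  fixes \<sigma> :: "('a::second_countable_topology \<times> 'b::second_countable_topology) measure"
  assumes "\<sigma> \<in> Mplus"
  shows finite_measure_marg1: "finite_measure (marg1 \<sigma>)"
    and mass_marg1: "mass (marg1 \<sigma>) = mass \<sigma>"
    and finite_measure_marg2: "finite_measure (marg2 \<sigma>)"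
    and mass_marg2: "mass (marg2 \<sigma>) = mass \<sigma>"
  using measurable_fst_borel[OF MplusD(2)[OF assms]] measurable_snd_borel[OF MplusD(2)[OF assms]]
    finite_measure.finite_measure_distr[OF MplusD(1)[OF assms]]
  by (auto simp: marg1_def marg2_def mass_def measure_distr)

lemma sets_marg1 [simp]: "sets (marg1 \<sigma>) = sets borel"
  and sets_marg2 [simp]: "sets (marg2 \<sigma>) = sets borel"
  by (simp_all add: marg1_def marg2_def)

section \<open>The objective and its linearisation\<close>

locale gw_problem =
  fixes \<mu> :: "'a::polish_space measure" and \<nu> :: "'b::polish_space measure"
    and lam :: "real \<Rightarrow> real" and \<rho> \<epsilon> :: real
    and \<gamma> :: "('a \<times> 'b) measure"
  assumes sets_\<mu>: "sets \<mu> = sets borel" and finite_\<mu>: "finite_measure \<mu>"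
    and sets_\<nu>: "sets \<nu> = sets borel" and finite_\<nu>: "finite_measure \<nu>"
    and lam_measurable: "lam \<in> borel_measurable borel"
    and \<rho>_pos: "0 < \<rho>" and \<epsilon>_nonneg: "0 \<le> \<epsilon>"
    and \<gamma>_Mplus: "\<gamma> \<in> Mplus"
begin

definition lam_dist :: "'a \<times> 'b \<Rightarrow> 'a \<times> 'b \<Rightarrow> real" where
  "lam_dist z w = lam \<bar>dist (fst z) (fst w) - dist (snd z) (snd w)\<bar>"

definition cost_pos :: "'a \<times> 'b \<Rightarrow> ennreal" where
  "cost_pos z = (\<integral>\<^sup>+w. ennreal (lam_dist z w) \<partial>\<gamma>)"

definition cost_neg :: "'a \<times> 'b \<Rightarrow> ennreal" where
  "cost_neg z = (\<integral>\<^sup>+w. ennreal (- lam_dist z w) \<partial>\<gamma>)"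

definition ent1 :: ereal where "ent1 = logint (marg1 \<gamma>) \<mu>"
definition ent2 :: ereal where "ent2 = logint (marg2 \<gamma>) \<nu>"
definition ent12 :: ereal where "ent12 = logint \<gamma> (\<mu> \<Otimes>\<^sub>M \<nu>)"

definition objective :: "('a \<times> 'b) measure \<Rightarrow> ereal" where
  "objective \<sigma> = GWF dist dist \<mu> \<nu> lam \<rho> \<sigma> \<gamma> + ereal \<epsilon> * KL (\<sigma> \<Otimes>\<^sub>M \<gamma>) ((\<mu> \<Otimes>\<^sub>M \<nu>) \<Otimes>\<^sub>M (\<mu> \<Otimes>\<^sub>M \<nu>))"

definition penalty :: "('a \<times> 'b) measure \<Rightarrow> ereal" where
  "penalty \<sigma> = ereal (\<rho> * mass \<gamma>) * KL (marg1 \<sigma>) \<mu> + ereal (\<rho> * mass \<gamma>) * KL (marg2 \<sigma>) \<nu>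
     + ereal (\<epsilon> * mass \<gamma>) * KL \<sigma> (\<mu> \<Otimes>\<^sub>M \<nu>)"

definition linearized :: "('a \<times> 'b) measure \<Rightarrow> ereal" where
  "linearized \<sigma> = eint \<sigma> (cost dist dist \<mu> \<nu> lam \<rho> \<epsilon> \<gamma>) + penalty \<sigma>"

lemma finite_\<gamma>: "finite_measure \<gamma>" and sets_\<gamma>: "sets \<gamma> = sets borel"
  using MplusD[OF \<gamma>_Mplus] by auto

lemma sets_\<mu>\<nu>: "sets (\<mu> \<Otimes>\<^sub>M \<nu>) = sets borel"
  using sets_pair_measure_cong[OF sets_\<mu> sets_\<nu>] by (metis borel_prod)

lemma finite_\<mu>\<nu>: "finite_measure (\<mu> \<Otimes>\<^sub>M \<nu>)"
  using finite_\<nu> finite_\<mu> by (rule finite_measure_pair_measure)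

lemma lam_dist_measurable:
  assumes "sets \<sigma> = sets borel" "sets \<tau> = sets borel"
  shows "(\<lambda>p. lam_dist (fst p) (snd p)) \<in> borel_measurable (\<sigma> \<Otimes>\<^sub>M \<tau>)"
proof -
  have "sets (borel :: ('a \<times> 'b) measure) = sets (borel \<Otimes>\<^sub>M borel)"
    by (metis borel_prod)
  then have "sets (\<sigma> \<Otimes>\<^sub>M \<tau>) = sets ((borel \<Otimes>\<^sub>M borel) \<Otimes>\<^sub>M (borel \<Otimes>\<^sub>M borel) :: (('a \<times> 'b) \<times> ('a \<times> 'b)) measure)"
    using assms by (intro sets_pair_measure_cong) auto
  then show ?thesis
    unfolding lam_dist_def
    by (simp cong: measurable_cong_sets) (rule measurable_compose[OF _ lam_measurable], measurable)
qed

lemma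
  assumes "sets \<sigma> = sets borel"
  shows cost_pos_measurable [measurable]: "cost_pos \<in> borel_measurable \<sigma>"
    and cost_neg_measurable [measurable]: "cost_neg \<in> borel_measurable \<sigma>"
proof -
  interpret finite_measure \<gamma> by (rule finite_\<gamma>)
  note [measurable] = lam_dist_measurable[OF assms sets_\<gamma>]
  show "cost_pos \<in> borel_measurable \<sigma>"
    using borel_measurable_nn_integral_fst[of "\<lambda>p. ennreal (lam_dist (fst p) (snd p))" \<sigma>]
    by (simp add: cost_pos_def[abs_def])
  show "cost_neg \<in> borel_measurable \<sigma>"
    using borel_measurable_nn_integral_fst[of "\<lambda>p. ennreal (- lam_dist (fst p) (snd p))" \<sigma>]
    by (simp add: cost_neg_def[abs_def])
qed

lemma eint_lam_dist:
  assumes "sets \<sigma> = sets borel"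
  shows "eint (\<sigma> \<Otimes>\<^sub>M \<gamma>) (\<lambda>p. ereal (lam_dist (fst p) (snd p)))
       = enn2ereal (\<integral>\<^sup>+z. cost_pos z \<partial>\<sigma>) - enn2ereal (\<integral>\<^sup>+z. cost_neg z \<partial>\<sigma>)"
proof -
  interpret finite_measure \<gamma> by (rule finite_\<gamma>)
  note [measurable] = lam_dist_measurable[OF assms sets_\<gamma>]
  show ?thesis unfolding eint_ereal
    by (subst (1 2) nn_integral_fst[symmetric]) (auto simp: cost_pos_def[abs_def] cost_neg_def[abs_def])
qed

lemma cost_eq:
  "cost dist dist \<mu> \<nu> lam \<rho> \<epsilon> \<gamma> z = enn2ereal (cost_pos z) - enn2ereal (cost_neg z)
     + ereal \<rho> * ent1 + ereal \<rho> * ent2 + ereal \<epsilon> * ent12"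
proof -
  obtain x y where z: "z = (x, y)" by (cases z)
  have "(\<lambda>(x', y'). ereal (lam \<bar>dist x x' - dist y y'\<bar>)) = (\<lambda>w. ereal (lam_dist z w))"
    by (auto simp: lam_dist_def z)
  then show ?thesis
    by (simp add: cost_def z eint_ereal cost_pos_def cost_neg_def ent1_def ent2_def ent12_def)
qed

lemma cost_measurable [measurable]:
  "sets \<sigma> = sets borel \<Longrightarrow> cost dist dist \<mu> \<nu> lam \<rho> \<epsilon> \<gamma> \<in> borel_measurable \<sigma>"
  unfolding cost_eq[abs_def] by measurable

lemma objective_eq:
  assumes "\<sigma> \<in> Mplus"
  shows "objective \<sigma> = enn2ereal (\<integral>\<^sup>+z. cost_pos z \<partial>\<sigma>) - enn2ereal (\<integral>\<^sup>+z. cost_neg z \<partial>\<sigma>)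
     + ereal \<rho> * KL (marg1 \<sigma> \<Otimes>\<^sub>M marg1 \<gamma>) (\<mu> \<Otimes>\<^sub>M \<mu>)
     + ereal \<rho> * KL (marg2 \<sigma> \<Otimes>\<^sub>M marg2 \<gamma>) (\<nu> \<Otimes>\<^sub>M \<nu>)
     + ereal \<epsilon> * KL (\<sigma> \<Otimes>\<^sub>M \<gamma>) ((\<mu> \<Otimes>\<^sub>M \<nu>) \<Otimes>\<^sub>M (\<mu> \<Otimes>\<^sub>M \<nu>))"
proof -
  have "(\<lambda>((x, y), (x', y')). ereal (lam \<bar>dist x x' - dist y y'\<bar>)) = (\<lambda>p. ereal (lam_dist (fst p) (snd p)))"
    by (auto simp: lam_dist_def)
  then show ?thesis
    by (simp add: objective_def GWF_def eint_lam_dist[OF MplusD(2)[OF assms]])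
qed

lemma ent_neq_minf: "ent1 \<noteq> -\<infinity>" "ent2 \<noteq> -\<infinity>" "ent12 \<noteq> -\<infinity>"
  unfolding ent1_def ent2_def ent12_def
  using logint_neq_minf[OF finite_\<gamma> finite_\<mu>\<nu>] sets_\<gamma> sets_\<mu>\<nu>
  by (simp_all add: logint_neq_minf finite_measure_marg1 finite_measure_marg2 \<gamma>_Mplus
      finite_\<mu> finite_\<nu> sets_\<mu> sets_\<nu>)

lemma objective_eq_linearized:
  assumes \<sigma>: "\<sigma> \<in> Mplus"
    and ent: "ent1 = ereal g1" "ent2 = ereal g2" "\<epsilon> = 0 \<or> ent12 = ereal g12"
    and pos_fin: "(\<integral>\<^sup>+z. cost_pos z \<partial>\<sigma>) \<noteq> \<infinity>"
  shows "objective \<sigma> = linearized \<sigma> + ereal (\<rho> * mass \<mu> * (mass \<mu> - mass \<gamma>)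
     + \<rho> * mass \<nu> * (mass \<nu> - mass \<gamma>) + \<epsilon> * mass (\<mu> \<Otimes>\<^sub>M \<nu>) * (mass (\<mu> \<Otimes>\<^sub>M \<nu>) - mass \<gamma>))"
    (is "_ = _ + ereal ?C")
proof -
  note fin = MplusD(1)[OF \<sigma>] finite_measure_marg1[OF \<sigma>] finite_measure_marg2[OF \<sigma>]
    finite_measure_marg1[OF \<gamma>_Mplus] finite_measure_marg2[OF \<gamma>_Mplus] finite_\<gamma> finite_\<mu> finite_\<nu> finite_\<mu>\<nu>
  note sets = MplusD(2)[OF \<sigma>] sets_\<gamma> sets_\<mu> sets_\<nu> sets_\<mu>\<nu>
  define k where "k = \<rho> * g1 + \<rho> * g2 + \<epsilon> * g12"
  define T where "T = enn2ereal (\<integral>\<^sup>+z. cost_pos z \<partial>\<sigma>) - enn2ereal (\<integral>\<^sup>+z. cost_neg z \<partial>\<sigma>)"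
  have "ereal \<epsilon> * ent12 = ereal (\<epsilon> * g12)"
    using ent(3) by (auto simp: zero_ereal_def[symmetric])
  then have "cost dist dist \<mu> \<nu> lam \<rho> \<epsilon> \<gamma> = (\<lambda>z. enn2ereal (cost_pos z) - enn2ereal (cost_neg z) + ereal k)"
    by (simp add: cost_eq[abs_def] ent k_def add.assoc)
  then have cost: "eint \<sigma> (cost dist dist \<mu> \<nu> lam \<rho> \<epsilon> \<gamma>) = T + ereal (k * mass \<sigma>)"
    using sets pos_fin by (simp add: T_def eint_enn2ereal_diff_add_const fin)
  have KL1: "ereal \<rho> * KL (marg1 \<sigma> \<Otimes>\<^sub>M marg1 \<gamma>) (\<mu> \<Otimes>\<^sub>M \<mu>)
      = ereal (\<rho> * mass \<gamma>) * KL (marg1 \<sigma>) \<mu> + ereal (\<rho> * (mass \<sigma> * g1 + mass \<mu> * (mass \<mu> - mass \<gamma>)))"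
    using KL_pair_measure_scaled[of "marg1 \<sigma>" "marg1 \<gamma>" \<mu> \<mu> \<rho> g1] fin sets ent(1) \<rho>_pos
    by (simp add: ent1_def mass_marg1 \<sigma> \<gamma>_Mplus)
  have KL2: "ereal \<rho> * KL (marg2 \<sigma> \<Otimes>\<^sub>M marg2 \<gamma>) (\<nu> \<Otimes>\<^sub>M \<nu>)
      = ereal (\<rho> * mass \<gamma>) * KL (marg2 \<sigma>) \<nu> + ereal (\<rho> * (mass \<sigma> * g2 + mass \<nu> * (mass \<nu> - mass \<gamma>)))"
    using KL_pair_measure_scaled[of "marg2 \<sigma>" "marg2 \<gamma>" \<nu> \<nu> \<rho> g2] fin sets ent(2) \<rho>_pos
    by (simp add: ent2_def mass_marg2 \<sigma> \<gamma>_Mplus)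
  have KL12: "ereal \<epsilon> * KL (\<sigma> \<Otimes>\<^sub>M \<gamma>) ((\<mu> \<Otimes>\<^sub>M \<nu>) \<Otimes>\<^sub>M (\<mu> \<Otimes>\<^sub>M \<nu>))
      = ereal (\<epsilon> * mass \<gamma>) * KL \<sigma> (\<mu> \<Otimes>\<^sub>M \<nu>)
        + ereal (\<epsilon> * (mass \<sigma> * g12 + mass (\<mu> \<Otimes>\<^sub>M \<nu>) * (mass (\<mu> \<Otimes>\<^sub>M \<nu>) - mass \<gamma>)))"
    using KL_pair_measure_scaled[of \<sigma> \<gamma> "\<mu> \<Otimes>\<^sub>M \<nu>" "\<mu> \<Otimes>\<^sub>M \<nu>" \<epsilon> g12] fin sets ent(3) \<epsilon>_nonneg
    by (simp add: ent12_def)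
  show ?thesis
    unfolding objective_eq[OF \<sigma>] KL1 KL2 KL12 linearized_def penalty_def cost T_def[symmetric]
    by (simp add: ac_simps distrib_left distrib_right k_def flip: plus_ereal.simps(1))
qed

lemma objective_eq_infinity_if_cost_pos_infinite:
  "\<sigma> \<in> Mplus \<Longrightarrow> (\<integral>\<^sup>+z. cost_pos z \<partial>\<sigma>) = \<infinity> \<Longrightarrow> objective \<sigma> = \<infinity>"
  by (simp add: objective_eq)

lemma objective_eq_infinity_if_entropy_infinite:
  assumes \<sigma>: "\<sigma> \<in> Mplus" and "mass \<sigma> \<noteq> 0"
    and ent: "ent1 = \<infinity> \<or> ent2 = \<infinity> \<or> (\<epsilon> \<noteq> 0 \<and> ent12 = \<infinity>)"
  shows "objective \<sigma> = \<infinity>"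
proof -
  note fin = MplusD(1)[OF \<sigma>] finite_measure_marg1[OF \<sigma>] finite_measure_marg2[OF \<sigma>]
    finite_measure_marg1[OF \<gamma>_Mplus] finite_measure_marg2[OF \<gamma>_Mplus] finite_\<gamma> finite_\<mu> finite_\<nu> finite_\<mu>\<nu>
  note sets = MplusD(2)[OF \<sigma>] sets_\<gamma> sets_\<mu> sets_\<nu> sets_\<mu>\<nu>
  from ent consider "ent1 = \<infinity>" | "ent2 = \<infinity>" | "0 < \<epsilon>" "ent12 = \<infinity>"
    using \<epsilon>_nonneg by force
  then show ?thesis
  proof cases
    case 1
    then have "KL (marg1 \<sigma> \<Otimes>\<^sub>M marg1 \<gamma>) (\<mu> \<Otimes>\<^sub>M \<mu>) = \<infinity>"
      using fin sets \<open>mass \<sigma> \<noteq> 0\<close>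
      by (intro KL_pair_measure_eq_infinity) (auto simp: ent1_def mass_marg1 \<sigma>)
    then show ?thesis using \<rho>_pos by (simp add: objective_eq[OF \<sigma>])
  next
    case 2
    then have "KL (marg2 \<sigma> \<Otimes>\<^sub>M marg2 \<gamma>) (\<nu> \<Otimes>\<^sub>M \<nu>) = \<infinity>"
      using fin sets \<open>mass \<sigma> \<noteq> 0\<close>
      by (intro KL_pair_measure_eq_infinity) (auto simp: ent2_def mass_marg2 \<sigma>)
    then show ?thesis using \<rho>_pos by (simp add: objective_eq[OF \<sigma>])
  next
    case 3
    then have "KL (\<sigma> \<Otimes>\<^sub>M \<gamma>) ((\<mu> \<Otimes>\<^sub>M \<nu>) \<Otimes>\<^sub>M (\<mu> \<Otimes>\<^sub>M \<nu>)) = \<infinity>"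
      using fin sets \<open>mass \<sigma> \<noteq> 0\<close>
      by (intro KL_pair_measure_eq_infinity) (auto simp: ent12_def)
    then show ?thesis using 3 by (simp add: objective_eq[OF \<sigma>])
  qed
qed

lemma
  fixes \<sigma> :: "('a \<times> 'b) measure"
  assumes \<sigma>: "\<sigma> \<in> Mplus" and "mass \<sigma> = 0"
  shows emeasure_space_null: "emeasure \<sigma> (space \<sigma>) = 0"
    and emeasure_space_marg1_null: "emeasure (marg1 \<sigma>) (space (marg1 \<sigma>)) = 0"
    and emeasure_space_marg2_null: "emeasure (marg2 \<sigma>) (space (marg2 \<sigma>)) = 0"
  using assms mass_eq_0_iff[OF MplusD(1)[OF \<sigma>]] mass_eq_0_iff[OF finite_measure_marg1[OF \<sigma>]]
    mass_eq_0_iff[OF finite_measure_marg2[OF \<sigma>]]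
  by (simp_all add: mass_marg1 mass_marg2)

lemma objective_neq_infinity_if_null:
  assumes \<sigma>: "\<sigma> \<in> Mplus" and "mass \<sigma> = 0"
  shows "objective \<sigma> \<noteq> \<infinity>"
proof -
  note null = emeasure_space_null[OF assms] emeasure_space_marg1_null[OF assms]
    emeasure_space_marg2_null[OF assms]
  have "KL (marg1 \<sigma> \<Otimes>\<^sub>M marg1 \<gamma>) (\<mu> \<Otimes>\<^sub>M \<mu>) = ereal (mass (\<mu> \<Otimes>\<^sub>M \<mu>))"
    "KL (marg2 \<sigma> \<Otimes>\<^sub>M marg2 \<gamma>) (\<nu> \<Otimes>\<^sub>M \<nu>) = ereal (mass (\<nu> \<Otimes>\<^sub>M \<nu>))"
    "KL (\<sigma> \<Otimes>\<^sub>M \<gamma>) ((\<mu> \<Otimes>\<^sub>M \<nu>) \<Otimes>\<^sub>M (\<mu> \<Otimes>\<^sub>M \<nu>)) = ereal (mass ((\<mu> \<Otimes>\<^sub>M \<nu>) \<Otimes>\<^sub>M (\<mu> \<Otimes>\<^sub>M \<nu>)))"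
    using null MplusD[OF \<sigma>] finite_\<gamma> sets_\<gamma> sets_\<mu> sets_\<nu> sets_\<mu>\<nu>
      emeasure_space_pair_measure[OF finite_measure_marg1[OF \<sigma>] finite_measure_marg1[OF \<gamma>_Mplus]]
      emeasure_space_pair_measure[OF finite_measure_marg2[OF \<sigma>] finite_measure_marg2[OF \<gamma>_Mplus]]
      emeasure_space_pair_measure[OF MplusD(1)[OF \<sigma>] finite_\<gamma>]
    by (auto intro!: KL_null_space sets_pair_measure_cong)
  then show ?thesis
    by (simp add: objective_eq[OF \<sigma>] nn_integral_null_space null)
qed

lemma linearized_null:
  assumes \<sigma>: "\<sigma> \<in> Mplus" and "mass \<sigma> = 0"
  shows "linearized \<sigma> = ereal (mass \<gamma> * (\<rho> * mass \<mu> + \<rho> * mass \<nu> + \<epsilon> * mass (\<mu> \<Otimes>\<^sub>M \<nu>)))"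
proof -
  note null = emeasure_space_null[OF assms] emeasure_space_marg1_null[OF assms]
    emeasure_space_marg2_null[OF assms]
  have "KL (marg1 \<sigma>) \<mu> = ereal (mass \<mu>)" "KL (marg2 \<sigma>) \<nu> = ereal (mass \<nu>)"
    "KL \<sigma> (\<mu> \<Otimes>\<^sub>M \<nu>) = ereal (mass (\<mu> \<Otimes>\<^sub>M \<nu>))"
    using null MplusD(2)[OF \<sigma>] sets_\<mu> sets_\<nu> sets_\<mu>\<nu> by (auto intro!: KL_null_space)
  then show ?thesis
    by (simp add: linearized_def penalty_def eint_null_space null algebra_simps)
qed

lemma linearized_eq_infinity_if_entropy_infinite:
  assumes \<sigma>: "\<sigma> \<in> Mplus" and "mass \<sigma> \<noteq> 0"
    and ent: "ent1 = \<infinity> \<or> ent2 = \<infinity> \<or> (\<epsilon> \<noteq> 0 \<and> ent12 = \<infinity>)"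
  shows "linearized \<sigma> = \<infinity>"
proof -
  txt \<open>In \<open>ereal\<close>, \<open>-\<infinity> + \<infinity> = \<infinity>\<close>, so the cost is \<open>\<infinity>\<close> everywhere.\<close>
  have ent_sum: "ereal \<rho> * ent1 + (ereal \<rho> * ent2 + ereal \<epsilon> * ent12) = \<infinity>"
    using ent ent_neq_minf \<rho>_pos \<epsilon>_nonneg by (auto simp: less_le)
  have "cost dist dist \<mu> \<nu> lam \<rho> \<epsilon> \<gamma> = (\<lambda>z. \<infinity>)"
    unfolding cost_eq[abs_def] add.assoc ent_sum by simp
  moreover have "emeasure \<sigma> (space \<sigma>) \<noteq> 0"
    using assms mass_eq_0_iff[OF MplusD(1)[OF \<sigma>]] by simp
  ultimately show ?thesis
    by (simp add: linearized_def eint_def ennreal_mult_eq_top_iff)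
qed

lemma penalty_neq_minf:
  assumes \<sigma>: "\<sigma> \<in> Mplus"
  shows "penalty \<sigma> \<noteq> -\<infinity>"
proof -
  have scaled: "ereal (t * mass \<gamma>) * X \<noteq> -\<infinity>" if "X \<noteq> -\<infinity>" "0 \<le> t" for t X
    using that mass_nonneg[of \<gamma>] by (cases X) (auto simp: ereal_mult_infty)
  have sum: "X + Y \<noteq> -\<infinity>" if "X \<noteq> -\<infinity>" "Y \<noteq> -\<infinity>" for X Y :: ereal
    using that by (cases X; cases Y) auto
  have "KL (marg1 \<sigma>) \<mu> \<noteq> -\<infinity>" "KL (marg2 \<sigma>) \<nu> \<noteq> -\<infinity>" "KL \<sigma> (\<mu> \<Otimes>\<^sub>M \<nu>) \<noteq> -\<infinity>"
    using KL_neq_minf[OF finite_measure_marg1[OF \<sigma>] finite_\<mu>] KL_neq_minf[OF finite_measure_marg2[OF \<sigma>] finite_\<nu>]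
      KL_neq_minf[OF MplusD(1)[OF \<sigma>] finite_\<mu>\<nu>] MplusD(2)[OF \<sigma>] sets_\<mu> sets_\<nu> sets_\<mu>\<nu>
    by auto
  then show ?thesis
    unfolding penalty_def using \<rho>_pos \<epsilon>_nonneg by (intro sum scaled) auto
qed

lemma penalty_restrict_le:
  fixes \<sigma> :: "('a \<times> 'b) measure"
  assumes \<sigma>: "\<sigma> \<in> Mplus" and A: "A \<in> sets \<sigma>"
  defines "h \<equiv> measure \<sigma> (space \<sigma> - A)"
  shows "penalty (density \<sigma> (indicator A)) \<le> penalty \<sigma>
     + ereal (\<rho> * mass \<gamma> * (h - h * ln (h / mass \<mu>)) + \<rho> * mass \<gamma> * (h - h * ln (h / mass \<nu>))
       + \<epsilon> * mass \<gamma> * (h - h * ln (h / mass (\<mu> \<Otimes>\<^sub>M \<nu>))))"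
proof -
  have scale: "ereal t * X \<le> ereal t * Y + ereal (t * d)" if "X \<le> Y + ereal d" "0 \<le> t" for t d X Y
    using ereal_mult_left_mono[of X "Y + ereal d" "ereal t"] that by (simp add: ereal_distrib_left)
  have KL1: "KL (marg1 (density \<sigma> (indicator A))) \<mu> \<le> KL (marg1 \<sigma>) \<mu> + ereal (h - h * ln (h / mass \<mu>))"
    unfolding marg1_def h_def using MplusD[OF \<sigma>] A finite_\<mu> sets_\<mu>
    by (intro KL_distr_restrict_le measurable_fst_borel) auto
  have KL2: "KL (marg2 (density \<sigma> (indicator A))) \<nu> \<le> KL (marg2 \<sigma>) \<nu> + ereal (h - h * ln (h / mass \<nu>))"
    unfolding marg2_def h_def using MplusD[OF \<sigma>] A finite_\<nu> sets_\<nu>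
    by (intro KL_distr_restrict_le measurable_snd_borel) auto
  have KL12: "KL (density \<sigma> (indicator A)) (\<mu> \<Otimes>\<^sub>M \<nu>)
      \<le> KL \<sigma> (\<mu> \<Otimes>\<^sub>M \<nu>) + ereal (h - h * ln (h / mass (\<mu> \<Otimes>\<^sub>M \<nu>)))"
    unfolding h_def using MplusD[OF \<sigma>] A finite_\<mu>\<nu> sets_\<mu>\<nu>
    by (intro KL_restrict_le) auto
  have "0 \<le> \<rho> * mass \<gamma>" "0 \<le> \<epsilon> * mass \<gamma>"
    using \<rho>_pos \<epsilon>_nonneg mass_nonneg[of \<gamma>] by auto
  then have bound: "penalty (density \<sigma> (indicator A))
      \<le> (ereal (\<rho> * mass \<gamma>) * KL (marg1 \<sigma>) \<mu> + ereal (\<rho> * mass \<gamma> * (h - h * ln (h / mass \<mu>))))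
       + (ereal (\<rho> * mass \<gamma>) * KL (marg2 \<sigma>) \<nu> + ereal (\<rho> * mass \<gamma> * (h - h * ln (h / mass \<nu>))))
       + (ereal (\<epsilon> * mass \<gamma>) * KL \<sigma> (\<mu> \<Otimes>\<^sub>M \<nu>)
          + ereal (\<epsilon> * mass \<gamma> * (h - h * ln (h / mass (\<mu> \<Otimes>\<^sub>M \<nu>)))))"
    unfolding penalty_def by (intro add_mono scale KL1 KL2 KL12)
  have regroup: "(X1 + ereal c1) + (X2 + ereal c2) + (X3 + ereal c3) = X1 + X2 + X3 + ereal (c1 + c2 + c3)"
    for X1 X2 X3 :: ereal and c1 c2 c3 :: real
    by (cases X1; cases X2; cases X3) simp_all
  show ?thesis using bound unfolding regroup penalty_def[of \<sigma>] .
qed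

lemma linearized_approx:
  assumes \<sigma>: "\<sigma> \<in> Mplus" and "linearized \<sigma> < x"
  shows "\<exists>\<tau>\<in>Mplus. (\<integral>\<^sup>+z. cost_pos z \<partial>\<tau>) \<noteq> \<infinity> \<and> linearized \<tau> < x"
proof -
  let ?c = "cost dist dist \<mu> \<nu> lam \<rho> \<epsilon> \<gamma>"
  note [measurable] = cost_pos_measurable[OF MplusD(2)[OF \<sigma>]] cost_measurable[OF MplusD(2)[OF \<sigma>]]
  define A where "A n = {z \<in> space \<sigma>. cost_pos z \<le> of_nat n}" for n :: nat
  define h where "h n = measure \<sigma> (space \<sigma> - A n)" for n
  define s where "s n = \<rho> * mass \<gamma> * (h n - h n * ln (h n / mass \<mu>))
    + \<rho> * mass \<gamma> * (h n - h n * ln (h n / mass \<nu>))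
    + \<epsilon> * mass \<gamma> * (h n - h n * ln (h n / mass (\<mu> \<Otimes>\<^sub>M \<nu>)))" for n
  have [measurable]: "A n \<in> sets \<sigma>" for n by (simp add: A_def)
  obtain p where p: "penalty \<sigma> = ereal p"
    using penalty_neq_minf[OF \<sigma>] \<open>linearized \<sigma> < x\<close>
    by (cases "penalty \<sigma>") (auto simp: linearized_def)
  have "eint \<sigma> ?c \<noteq> \<infinity>" using \<open>linearized \<sigma> < x\<close> by (auto simp: linearized_def p)
  then have pos_fin: "(\<integral>\<^sup>+z. e2ennreal (?c z) \<partial>\<sigma>) \<noteq> \<infinity>" by (auto simp: eint_def)
  have "AE z in \<sigma>. e2ennreal (?c z) \<noteq> \<infinity>"
    using pos_fin by (intro nn_integral_noteq_infinite) auto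
  then have "AE z in \<sigma>. cost_pos z \<noteq> \<infinity>"
    by (auto simp: cost_eq elim!: eventually_mono)
  note trunc = sublevel_truncation[OF MplusD(1)[OF \<sigma>] _ this, folded A_def, simplified]
  have "(\<lambda>n. eint (density \<sigma> (indicator (A n))) ?c + ereal (p + s n)) \<longlonglongrightarrow> eint \<sigma> ?c + ereal (p + 0)"
  proof (intro tendsto_add_ereal_general tendsto_ereal tendsto_add tendsto_const)
    show "(\<lambda>n. eint (density \<sigma> (indicator (A n))) ?c) \<longlonglongrightarrow> eint \<sigma> ?c"
      using trunc pos_fin by (intro eint_restrict_LIMSEQ) auto
    have "h \<longlonglongrightarrow> 0" "\<And>n. 0 \<le> h n" using trunc by (auto simp: h_def[abs_def])
    then show "s \<longlonglongrightarrow> 0"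
      unfolding s_def[abs_def]
      by (intro tendsto_add_zero tendsto_mult_right_zero entropy_defect_LIMSEQ) (auto simp: mass_nonneg)
  qed simp
  then have "eventually (\<lambda>n. eint (density \<sigma> (indicator (A n))) ?c + ereal (p + s n) < x) sequentially"
    using \<open>linearized \<sigma> < x\<close> by (intro order_tendstoD(2)) (auto simp: linearized_def p)
  then obtain n where n: "eint (density \<sigma> (indicator (A n))) ?c + ereal (p + s n) < x"
    by (auto simp: eventually_sequentially)
  have "linearized (density \<sigma> (indicator (A n))) \<le> eint (density \<sigma> (indicator (A n))) ?c + ereal (p + s n)"
    using penalty_restrict_le[OF \<sigma>, of "A n"] p
    by (simp add: linearized_def s_def h_def add_left_mono)
  with n have "linearized (density \<sigma> (indicator (A n))) < x" by simp
  then show ?thesis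
    using trunc(4)[of n] density_indicator_Mplus[OF \<sigma>, of "A n"] by auto
qed

lemma objective_minimizer_neq_infinity:
  assumes "\<forall>\<sigma>\<in>Mplus. objective \<pi> \<le> objective \<sigma>"
  shows "objective \<pi> \<noteq> \<infinity>"
proof -
  have "objective \<pi> \<le> objective (null_measure borel)" using assms null_measure_Mplus by blast
  moreover have "objective (null_measure borel) \<noteq> \<infinity>"
    using objective_neq_infinity_if_null[OF null_measure_Mplus]
    by (simp add: mass_def measure_def emeasure_null_measure)
  ultimately show ?thesis by (auto simp: top_unique)
qed

lemma linearized_minimal_if_entropies_finite:
  assumes ent: "ent1 = ereal g1" "ent2 = ereal g2" "\<epsilon> = 0 \<or> ent12 = ereal g12"
    and \<pi>: "\<pi> \<in> Mplus" and \<pi>_min: "\<forall>\<sigma>\<in>Mplus. objective \<pi> \<le> objective \<sigma>"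
    and \<sigma>: "\<sigma> \<in> Mplus"
  shows "linearized \<pi> \<le> linearized \<sigma>"
proof (rule dense_ge)
  fix x assume "linearized \<sigma> < x"
  then obtain \<tau> where \<tau>: "\<tau> \<in> Mplus" "(\<integral>\<^sup>+z. cost_pos z \<partial>\<tau>) \<noteq> \<infinity>" "linearized \<tau> < x"
    using linearized_approx[OF \<sigma>] by blast
  have "(\<integral>\<^sup>+z. cost_pos z \<partial>\<pi>) \<noteq> \<infinity>"
    using objective_eq_infinity_if_cost_pos_infinite[OF \<pi>] objective_minimizer_neq_infinity[OF \<pi>_min]
    by auto
  moreover have "objective \<pi> \<le> objective \<tau>" using \<pi>_min \<tau>(1) by blast
  ultimately have "linearized \<pi> \<le> linearized \<tau>"
    by (simp add: objective_eq_linearized[OF \<pi> ent] objective_eq_linearized[OF \<tau>(1) ent \<tau>(2)]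
        ereal_add_le_add_iff2)
  with \<tau>(3) show "linearized \<pi> \<le> x" by simp
qed

lemma linearized_minimal_if_entropy_infinite:
  assumes ent: "ent1 = \<infinity> \<or> ent2 = \<infinity> \<or> (\<epsilon> \<noteq> 0 \<and> ent12 = \<infinity>)"
    and \<pi>: "\<pi> \<in> Mplus" and \<pi>_min: "\<forall>\<sigma>\<in>Mplus. objective \<pi> \<le> objective \<sigma>"
    and \<sigma>: "\<sigma> \<in> Mplus"
  shows "linearized \<pi> \<le> linearized \<sigma>"
proof -
  have "mass \<pi> = 0"
    using objective_eq_infinity_if_entropy_infinite[OF \<pi> _ ent] objective_minimizer_neq_infinity[OF \<pi>_min]
    by blast
  show ?thesis
  proof (cases "mass \<sigma> = 0")
    case True
    then show ?thesis using linearized_null[OF \<pi> \<open>mass \<pi> = 0\<close>] linearized_null[OF \<sigma>] by simp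
  next
    case False
    then show ?thesis using linearized_eq_infinity_if_entropy_infinite[OF \<sigma> False ent] by simp
  qed
qed

end

theorem proposition5:
  fixes \<mu> :: "'a::polish_space measure" and \<nu> :: "'b::polish_space measure"
    and lam :: "real \<Rightarrow> real" and \<rho> \<epsilon> :: real
    and \<gamma> \<pi> :: "('a \<times> 'b) measure"
  assumes mu: "sets \<mu> = sets borel" "finite_measure \<mu>"
    and nu: "sets \<nu> = sets borel" "finite_measure \<nu>"
    and lam_meas: "lam \<in> borel_measurable borel"
    and rho: "\<rho> > 0" and eps: "\<epsilon> \<ge> 0"
    and gamma: "\<gamma> \<in> Mplus"
    and pi: "\<pi> \<in> Mplus"
    and pi_min: "\<forall>\<pi>'\<in>Mplus.
       GWF dist dist \<mu> \<nu> lam \<rho> \<pi> \<gamma> + ereal \<epsilon> * KL (\<pi> \<Otimes>\<^sub>M \<gamma>) ((\<mu> \<Otimes>\<^sub>M \<nu>) \<Otimes>\<^sub>M (\<mu> \<Otimes>\<^sub>M \<nu>))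
       \<le> GWF dist dist \<mu> \<nu> lam \<rho> \<pi>' \<gamma> + ereal \<epsilon> * KL (\<pi>' \<Otimes>\<^sub>M \<gamma>) ((\<mu> \<Otimes>\<^sub>M \<nu>) \<Otimes>\<^sub>M (\<mu> \<Otimes>\<^sub>M \<nu>))"
  shows "\<forall>\<pi>'\<in>Mplus.
       eint \<pi> (cost dist dist \<mu> \<nu> lam \<rho> \<epsilon> \<gamma>)
         + ereal (\<rho> * mass \<gamma>) * KL (marg1 \<pi>) \<mu>
         + ereal (\<rho> * mass \<gamma>) * KL (marg2 \<pi>) \<nu>
         + ereal (\<epsilon> * mass \<gamma>) * KL \<pi> (\<mu> \<Otimes>\<^sub>M \<nu>)
       \<le> eint \<pi>' (cost dist dist \<mu> \<nu> lam \<rho> \<epsilon> \<gamma>)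
         + ereal (\<rho> * mass \<gamma>) * KL (marg1 \<pi>') \<mu>
         + ereal (\<rho> * mass \<gamma>) * KL (marg2 \<pi>') \<nu>
         + ereal (\<epsilon> * mass \<gamma>) * KL \<pi>' (\<mu> \<Otimes>\<^sub>M \<nu>)"
proof -
  interpret gw_problem \<mu> \<nu> lam \<rho> \<epsilon> \<gamma>
    using mu nu lam_meas rho eps gamma by (intro gw_problem.intro)
  have min: "\<forall>\<sigma>\<in>Mplus. objective \<pi> \<le> objective \<sigma>"
    using pi_min by (simp add: objective_def)
  have "linearized \<pi> \<le> linearized \<sigma>" if \<sigma>: "\<sigma> \<in> Mplus" for \<sigma>
  proof (cases "ent1 \<noteq> \<infinity> \<and> ent2 \<noteq> \<infinity> \<and> (\<epsilon> = 0 \<or> ent12 \<noteq> \<infinity>)")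
    case True
    obtain g1 g2 g12 where "ent1 = ereal g1" "ent2 = ereal g2" "\<epsilon> = 0 \<or> ent12 = ereal g12"
      using True ent_neq_minf by (cases ent1; cases ent2; cases ent12) auto
    then show ?thesis by (rule linearized_minimal_if_entropies_finite[OF _ _ _ pi min \<sigma>])
  next
    case False
    then show ?thesis by (intro linearized_minimal_if_entropy_infinite[OF _ pi min \<sigma>]) auto
  qed
  then show ?thesis by (simp add: linearized_def penalty_def add.assoc)
qed

end
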